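(* Let $\mathcal{C}$ be a quasicategory with markings $W_0\subseteq W$, where $W$ is weakly closed under composition, and let $F\colon(\mathcal{C},W)\to(\mathcal{C},W_0)$ be a marked endofunctor (i.e. an endomorphism of $\mathcal{C}$ sending $W$ into $W_0$). (1) If $(\mathcal{C},W_0)$ has the right lifting property against $\{\mathrm{LJ}^n_k\hookrightarrow\mathrm{L}^n_k \mid n\ge2,\ 0<k\le n\}$ and there exists a marked homotopy $\alpha\colon(\mathcal{C},W)\times(\Delta^1)^\sharp\to(\mathcal{C},W)$ from $\mathrm{id}$ to $F$, then $(\mathcal{C},W)$ satisfies CLF. (2) If $(\mathcal{C},W_0)$ has the right lifting property against $\{\mathrm{RJ}^n_k\hookrightarrow\mathrm{R}^n_k\mid n\ge2,\ 0\le k<n\}$ and there exists a marked homotopy $\alpha\colon(\mathcal{C},W)\times(\Delta^1)^\sharp\to(\mathcal{C},W)$ from $F$ to $\mathrm{id}$, then $(\mathcal{C},W)$ satisfies CRF.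
   Context: A marked simplicial set is a pair $(X,W)$ where $X$ is a simplicial set and $W \subseteq X_1$ contains all degenerate $1$-simplices; marked maps preserve marked $1$-simplices. $(\Delta^1)^\sharp$ is $\Delta^1$ with all $1$-simplices marked; products of marked simplicial sets are marked at pairs of marked $1$-simplices. A marked homotopy from $f$ to $g$ is a marked map $\alpha\colon (X,W)\times(\Delta^1)^\sharp\to(X',W')$ with $\alpha|_{X\times\{0\}}=f$, $\alpha|_{X\times\{1\}}=g$. Posets are regarded as simplicial sets via the nerve; $[n]=\{0<\dots<n\}$. For $n\ge 0$, $0\le k\le n$, $\mathrm{L}^n_k$ is the nerve of the poset of subsets $A\subseteq[n]$ with $k\in A$, ordered by inclusion, where $A_0\subseteq A_1$ is marked iff $\max A_0=\max A_1$; $\mathrm{LJ}^n_k\subseteq \mathrm{L}^n_k$ is the maximal simplicial subset not containing the vertex $[n]$. $\mathrm{R}^n_k$ is the nerve of the opposite poset (arrows $A_0\to A_1$ when $A_0\supseteq A_1$), where $A_0\supseteq A_1$ is marked iff $\min A_0=\min A_1$; $\mathrm{RJ}^n_k\subseteq\mathrm{R}^n_k$ is the maximal simplicial subset omitting the vertex $[n]$. $W$ is weakly closed under composition if every map $\Lambda^2_1\to X$ with both edges marked extends to a $2$-simplex all of whose edges are marked. A marked quasicategory $(\mathcal{C},W)$ satisfies CLF if $W$ is weakly closed under composition and it has the right lifting property against all $\mathrm{LJ}^n_k\hookrightarrow\mathrm{L}^n_k$ ($n\ge2$, $0<k\le n$); it satisfies CRF if $W$ is weakly closed under composition and it has the right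 lifting property against all $\mathrm{RJ}^n_k\hookrightarrow\mathrm{R}^n_k$ ($n\ge2$, $0\le k<n$). *)

theory Defs
  imports Main
begin

text \<open>A simplicial set is given by its sets of n-simplices and by the action of
  every monotone map theta : [m] -> [n] (represented as a function nat => nat,
  only its values on 0..m matter), sending n-simplices to m-simplices.\<close>

record 'a sset =
  ssimp :: "nat \<Rightarrow> 'a set"
  smap  :: "nat \<Rightarrow> nat \<Rightarrow> (nat \<Rightarrow> nat) \<Rightarrow> 'a \<Rightarrow> 'a"

definition mono_map :: "nat \<Rightarrow> nat \<Rightarrow> (nat \<Rightarrow> nat) \<Rightarrow> bool" where
  "mono_map m n \<theta> \<longleftrightarrow> (\<forall>i\<le>m. \<theta> i \<le> n) \<and> (\<forall>i j. i \<le> j \<longrightarrow> j \<le> m \<longrightarrow> \<theta> i \<le> \<theta> j)"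

definition sset :: "'a sset \<Rightarrow> bool" where
  "sset X \<longleftrightarrow>
     (\<forall>m n \<theta> x. mono_map m n \<theta> \<longrightarrow> x \<in> ssimp X n \<longrightarrow> smap X m n \<theta> x \<in> ssimp X m) \<and>
     (\<forall>n x. x \<in> ssimp X n \<longrightarrow> smap X n n id x = x) \<and>
     (\<forall>l m n \<psi> \<theta> x. mono_map l m \<psi> \<longrightarrow> mono_map m n \<theta> \<longrightarrow> x \<in> ssimp X n \<longrightarrow>
         smap X l m \<psi> (smap X m n \<theta> x) = smap X l n (\<theta> \<circ> \<psi>) x) \<and>
     (\<forall>m n \<theta> \<theta>' x. mono_map m n \<theta> \<longrightarrow> (\<forall>i\<le>m. \<theta> i = \<theta>' i) \<longrightarrow> x \<in> ssimp X n \<longrightarrow>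
         smap X m n \<theta> x = smap X m n \<theta>' x)"

definition ssmap :: "'a sset \<Rightarrow> 'b sset \<Rightarrow> (nat \<Rightarrow> 'a \<Rightarrow> 'b) \<Rightarrow> bool" where
  "ssmap X Y f \<longleftrightarrow>
     (\<forall>n x. x \<in> ssimp X n \<longrightarrow> f n x \<in> ssimp Y n) \<and>
     (\<forall>m n \<theta> x. mono_map m n \<theta> \<longrightarrow> x \<in> ssimp X n \<longrightarrow>
         f m (smap X m n \<theta> x) = smap Y m n \<theta> (f n x))"

definition subsset :: "'a sset \<Rightarrow> (nat \<Rightarrow> 'a set) \<Rightarrow> 'a sset" where
  "subsset X S = \<lparr>ssimp = S, smap = smap X\<rparr>"

definition nerve :: "'p set \<Rightarrow> ('p \<Rightarrow> 'p \<Rightarrow> bool) \<Rightarrow> (nat \<Rightarrow> 'p) sset" where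
  "nerve P le = \<lparr>ssimp = (\<lambda>n. {\<sigma>. (\<forall>i\<le>n. \<sigma> i \<in> P) \<and>
                                 (\<forall>i j. i \<le> j \<longrightarrow> j \<le> n \<longrightarrow> le (\<sigma> i) (\<sigma> j)) \<and>
                                 (\<forall>i>n. \<sigma> i = undefined)}),
                 smap = (\<lambda>m n \<theta> \<sigma>. (\<lambda>i. if i \<le> m then \<sigma> (\<theta> i) else undefined))\<rparr>"

definition Delta :: "nat \<Rightarrow> (nat \<Rightarrow> nat) sset" where
  "Delta n = nerve {0..n} (\<le>)"

text \<open>Horn: union of the faces d_j Delta^n, j /= k.\<close>
definition horn :: "nat \<Rightarrow> nat \<Rightarrow> (nat \<Rightarrow> nat) sset" where
  "horn n k = subsset (Delta n)
     (\<lambda>m. {\<sigma> \<in> ssimp (Delta n) m. \<exists>j\<le>n. j \<noteq> k \<and> j \<notin> \<sigma> ` {0..m}})"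

definition sprod :: "'a sset \<Rightarrow> 'b sset \<Rightarrow> ('a \<times> 'b) sset" where
  "sprod X Y = \<lparr>ssimp = (\<lambda>n. ssimp X n \<times> ssimp Y n),
                smap = (\<lambda>m n \<theta> p. (smap X m n \<theta> (fst p), smap Y m n \<theta> (snd p)))\<rparr>"

definition const_simplex :: "nat \<Rightarrow> nat \<Rightarrow> (nat \<Rightarrow> nat)" where
  "const_simplex n e = (\<lambda>i. if i \<le> n then e else undefined)"

definition rlp :: "'b sset \<Rightarrow> 'b sset \<Rightarrow> 'a sset \<Rightarrow> bool" where
  "rlp A B X \<longleftrightarrow> (\<forall>f. ssmap A X f \<longrightarrow>
      (\<exists>g. ssmap B X g \<and> (\<forall>m x. x \<in> ssimp A m \<longrightarrow> g m x = f m x)))"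

definition quasicategory :: "'a sset \<Rightarrow> bool" where
  "quasicategory X \<longleftrightarrow> sset X \<and>
     (\<forall>n k. 0 < k \<longrightarrow> k < n \<longrightarrow> rlp (horn n k) (Delta n) X)"

definition marked_sset :: "'a sset \<Rightarrow> 'a set \<Rightarrow> bool" where
  "marked_sset X W \<longleftrightarrow> sset X \<and> W \<subseteq> ssimp X 1 \<and>
     (\<forall>x\<in>ssimp X 0. smap X 1 0 (\<lambda>_. 0) x \<in> W)"

definition marked_map :: "'a sset \<Rightarrow> 'a set \<Rightarrow> 'b sset \<Rightarrow> 'b set \<Rightarrow> (nat \<Rightarrow> 'a \<Rightarrow> 'b) \<Rightarrow> bool" where
  "marked_map X W Y V f \<longleftrightarrow> ssmap X Y f \<and> f 1 ` W \<subseteq> V"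

definition marked_rlp :: "'b sset \<Rightarrow> 'b sset \<Rightarrow> 'b set \<Rightarrow> 'a sset \<Rightarrow> 'a set \<Rightarrow> bool" where
  "marked_rlp A B M X W \<longleftrightarrow> (\<forall>f. marked_map A (M \<inter> ssimp A 1) X W f \<longrightarrow>
      (\<exists>g. marked_map B M X W g \<and> (\<forall>m x. x \<in> ssimp A m \<longrightarrow> g m x = f m x)))"

definition marked_homotopy ::
  "'a sset \<Rightarrow> 'a set \<Rightarrow> 'b sset \<Rightarrow> 'b set \<Rightarrow> (nat \<Rightarrow> 'a \<times> (nat \<Rightarrow> nat) \<Rightarrow> 'b)
     \<Rightarrow> (nat \<Rightarrow> 'a \<Rightarrow> 'b) \<Rightarrow> (nat \<Rightarrow> 'a \<Rightarrow> 'b) \<Rightarrow> bool" where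
  "marked_homotopy X W Y V \<alpha> f g \<longleftrightarrow>
     marked_map (sprod X (Delta 1)) (W \<times> ssimp (Delta 1) 1) Y V \<alpha> \<and>
     (\<forall>n x. x \<in> ssimp X n \<longrightarrow> \<alpha> n (x, const_simplex n 0) = f n x) \<and>
     (\<forall>n x. x \<in> ssimp X n \<longrightarrow> \<alpha> n (x, const_simplex n 1) = g n x)"

definition weakly_closed :: "'a sset \<Rightarrow> 'a set \<Rightarrow> bool" where
  "weakly_closed X W \<longleftrightarrow> (\<forall>h. ssmap (horn 2 1) X h \<and> h 1 ` ssimp (horn 2 1) 1 \<subseteq> W \<longrightarrow>
      (\<exists>g. ssmap (Delta 2) X g \<and> g 1 ` ssimp (Delta 2) 1 \<subseteq> W \<and>
           (\<forall>m x. x \<in> ssimp (horn 2 1) m \<longrightarrow> g m x = h m x)))"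

definition subsets_with :: "nat \<Rightarrow> nat \<Rightarrow> nat set set" where
  "subsets_with n k = {A. A \<subseteq> {0..n} \<and> k \<in> A}"

definition L :: "nat \<Rightarrow> nat \<Rightarrow> (nat \<Rightarrow> nat set) sset" where
  "L n k = nerve (subsets_with n k) (\<subseteq>)"

definition L_marked :: "nat \<Rightarrow> nat \<Rightarrow> (nat \<Rightarrow> nat set) set" where
  "L_marked n k = {\<sigma> \<in> ssimp (L n k) 1. Max (\<sigma> 0) = Max (\<sigma> 1)}"

definition LJ :: "nat \<Rightarrow> nat \<Rightarrow> (nat \<Rightarrow> nat set) sset" where
  "LJ n k = subsset (L n k) (\<lambda>m. {\<sigma> \<in> ssimp (L n k) m. \<forall>i\<le>m. \<sigma> i \<noteq> {0..n}})"

definition R :: "nat \<Rightarrow> nat \<Rightarrow> (nat \<Rightarrow> nat set) sset" where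
  "R n k = nerve (subsets_with n k) (\<supseteq>)"

definition R_marked :: "nat \<Rightarrow> nat \<Rightarrow> (nat \<Rightarrow> nat set) set" where
  "R_marked n k = {\<sigma> \<in> ssimp (R n k) 1. Min (\<sigma> 0) = Min (\<sigma> 1)}"

definition RJ :: "nat \<Rightarrow> nat \<Rightarrow> (nat \<Rightarrow> nat set) sset" where
  "RJ n k = subsset (R n k) (\<lambda>m. {\<sigma> \<in> ssimp (R n k) m. \<forall>i\<le>m. \<sigma> i \<noteq> {0..n}})"

definition rlp_L :: "'a sset \<Rightarrow> 'a set \<Rightarrow> bool" where
  "rlp_L X W \<longleftrightarrow> (\<forall>n k. 2 \<le> n \<longrightarrow> 0 < k \<longrightarrow> k \<le> n \<longrightarrow>
      marked_rlp (LJ n k) (L n k) (L_marked n k) X W)"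

definition rlp_R :: "'a sset \<Rightarrow> 'a set \<Rightarrow> bool" where
  "rlp_R X W \<longleftrightarrow> (\<forall>n k. 2 \<le> n \<longrightarrow> k < n \<longrightarrow>
      marked_rlp (RJ n k) (R n k) (R_marked n k) X W)"

definition CLF :: "'a sset \<Rightarrow> 'a set \<Rightarrow> bool" where
  "CLF X W \<longleftrightarrow> weakly_closed X W \<and> rlp_L X W"

definition CRF :: "'a sset \<Rightarrow> 'a set \<Rightarrow> bool" where
  "CRF X W \<longleftrightarrow> weakly_closed X W \<and> rlp_R X W"

end

theory Submission
  imports Defs
begin

(*
  Let f : LJ^n_k -> (C, W) be marked. The hypothesis on W0 lifts F \<circ> f to a marked
  g' : L^n_k -> (C, W0). Consider the poset L^n_k \<times> [1] with its vertex ([n], 0) removed. The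
  homotopy \<alpha> applied to f, together with g', defines a map on the chains of
  (LJ^n_k \<times> [1]) \<union> (L^n_k \<times> {1}); the two pieces agree because \<alpha>(f, 1) = F \<circ> f = g' on LJ^n_k.
  Every other chain contains ([n], 1) and a pair (A, 0) < (A, 1), and all its faces except itself
  and the one opposite (A, 1) are already present when the chains are added in order of size
  (then of the number of vertices at level 0): each step fills an inner horn of C. The triangles
  (A, 0) < (A, 1) < ([n], 1) go first and are filled by weak closedness of W, which makes the edge
  (A, 0) -> ([n], 1) marked when A -> [n] is marked in L^n_k. Restricting along A \<mapsto> (A, 0),
  [n] \<mapsto> ([n], 1) gives the required extension of f, since \<alpha> is the identity at level 0.
  For R^n_k the same argument runs in the opposite poset.
*)

section \<open>Finite chains in partial orders\<close>

definition po_on :: "'p set \<Rightarrow> ('p \<Rightarrow> 'p \<Rightarrow> bool) \<Rightarrow> bool" where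
  "po_on Q le \<longleftrightarrow> (\<forall>x\<in>Q. le x x) \<and> (\<forall>x\<in>Q. \<forall>y\<in>Q. le x y \<longrightarrow> le y x \<longrightarrow> x = y) \<and>
     (\<forall>x\<in>Q. \<forall>y\<in>Q. \<forall>z\<in>Q. le x y \<longrightarrow> le y z \<longrightarrow> le x z)"

definition fin_chain :: "'p set \<Rightarrow> ('p \<Rightarrow> 'p \<Rightarrow> bool) \<Rightarrow> 'p set \<Rightarrow> bool" where
  "fin_chain Q le U \<longleftrightarrow> U \<subseteq> Q \<and> finite U \<and> U \<noteq> {} \<and> (\<forall>x\<in>U. \<forall>y\<in>U. le x y \<or> le y x)"

definition chain_rank :: "('p \<Rightarrow> 'p \<Rightarrow> bool) \<Rightarrow> 'p set \<Rightarrow> 'p \<Rightarrow> nat" where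
  "chain_rank le U x = card {y\<in>U. le y x \<and> y \<noteq> x}"

definition chain_nth :: "('p \<Rightarrow> 'p \<Rightarrow> bool) \<Rightarrow> 'p set \<Rightarrow> nat \<Rightarrow> 'p" where
  "chain_nth le U = the_inv_into U (chain_rank le U)"

lemma po_onD:
  assumes "po_on Q le"
  shows "x \<in> Q \<Longrightarrow> le x x"
    and "x \<in> Q \<Longrightarrow> y \<in> Q \<Longrightarrow> le x y \<Longrightarrow> le y x \<Longrightarrow> x = y"
    and "x \<in> Q \<Longrightarrow> y \<in> Q \<Longrightarrow> z \<in> Q \<Longrightarrow> le x y \<Longrightarrow> le y z \<Longrightarrow> le x z"
  using assms unfolding po_on_def by blast+

lemma fin_chainD:
  assumes "fin_chain Q le U"
  shows "U \<subseteq> Q" and "finite U" and "U \<noteq> {}" and "x \<in> U \<Longrightarrow> y \<in> U \<Longrightarrow> le x y \<or> le y x"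
  using assms unfolding fin_chain_def by blast+

lemma fin_chain_subset: "fin_chain Q le U \<Longrightarrow> V \<subseteq> U \<Longrightarrow> V \<noteq> {} \<Longrightarrow> fin_chain Q le V"
  unfolding fin_chain_def by (auto intro: finite_subset)

lemma chain_rank_less:
  assumes po: "po_on Q le" and ch: "fin_chain Q le U"
    and xy: "x \<in> U" "y \<in> U" "le x y" "x \<noteq> y"
  shows "chain_rank le U x < chain_rank le U y"
proof -
  have xyQ: "x \<in> Q" "y \<in> Q" using xy fin_chainD(1)[OF ch] by auto
  have "{z\<in>U. le z x \<and> z \<noteq> x} \<subseteq> {z\<in>U. le z y \<and> z \<noteq> y}"
    using po_onD(2,3)[OF po] xy xyQ fin_chainD(1)[OF ch] by blast
  moreover have "x \<in> {z\<in>U. le z y \<and> z \<noteq> y}" "x \<notin> {z\<in>U. le z x \<and> z \<noteq> x}" using xy by auto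
  ultimately have "{z\<in>U. le z x \<and> z \<noteq> x} \<subset> {z\<in>U. le z y \<and> z \<noteq> y}" by blast
  then show ?thesis
    unfolding chain_rank_def using fin_chainD(2)[OF ch] by (intro psubset_card_mono) auto
qed

lemma chain_rank_mono:
  assumes po: "po_on Q le" and ch: "fin_chain Q le U" and xy: "x \<in> U" "y \<in> U" "le x y"
  shows "chain_rank le U x \<le> chain_rank le U y"
  using chain_rank_less[OF po ch xy] by (cases "x = y") auto

lemma chain_rank_less_card:
  assumes ch: "fin_chain Q le U" and x: "x \<in> U"
  shows "chain_rank le U x < card U"
proof -
  have "chain_rank le U x \<le> card (U - {x})"
    unfolding chain_rank_def using fin_chainD(2)[OF ch] by (intro card_mono) auto
  also have "\<dots> < card U" using x fin_chainD(2)[OF ch] by (meson card_Diff1_less)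
  finally show ?thesis .
qed

lemma bij_betw_chain_rank:
  assumes po: "po_on Q le" and ch: "fin_chain Q le U"
  shows "bij_betw (chain_rank le U) U {..<card U}"
proof -
  have inj: "inj_on (chain_rank le U) U"
  proof (rule inj_onI, rule ccontr)
    fix x y assume xy: "x \<in> U" "y \<in> U" "chain_rank le U x = chain_rank le U y" "x \<noteq> y"
    then show False
      using fin_chainD(4)[OF ch xy(1,2)] chain_rank_less[OF po ch, of x y] chain_rank_less[OF po ch, of y x]
      by auto
  qed
  moreover have "chain_rank le U ` U \<subseteq> {..<card U}" using chain_rank_less_card[OF ch] by auto
  moreover have "card (chain_rank le U ` U) = card {..<card U}" using card_image[OF inj] by simp
  ultimately show ?thesis unfolding bij_betw_def by (intro conjI card_subset_eq) auto
qed

lemma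
  assumes po: "po_on Q le" and ch: "fin_chain Q le U"
  shows chain_nth_in: "i < card U \<Longrightarrow> chain_nth le U i \<in> U"
    and chain_rank_nth: "i < card U \<Longrightarrow> chain_rank le U (chain_nth le U i) = i"
    and chain_nth_rank: "x \<in> U \<Longrightarrow> chain_nth le U (chain_rank le U x) = x"
  using bij_betw_chain_rank[OF po ch] unfolding chain_nth_def bij_betw_def
  by (auto intro: the_inv_into_into f_the_inv_into_f the_inv_into_f_f)

lemma chain_nth_mono:
  assumes po: "po_on Q le" and ch: "fin_chain Q le U" and ij: "i \<le> j" "j < card U"
  shows "le (chain_nth le U i) (chain_nth le U j)"
proof (rule ccontr)
  let ?x = "chain_nth le U i" and ?y = "chain_nth le U j"
  assume nle: "\<not> le ?x ?y"
  have mem: "?x \<in> U" "?y \<in> U" using chain_nth_in[OF po ch] ij by auto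
  have "le ?y ?x" using nle fin_chainD(4)[OF ch mem] by blast
  moreover have "?y \<noteq> ?x" using nle po_onD(1)[OF po, of ?x] mem(1) fin_chainD(1)[OF ch] by auto
  ultimately have "chain_rank le U ?y < chain_rank le U ?x" using chain_rank_less[OF po ch mem(2,1)] by blast
  then show False using chain_rank_nth[OF po ch] ij by auto
qed

lemma chain_rank_inner:
  assumes po: "po_on Q le" and ch: "fin_chain Q le U" and in_U: "a \<in> U" "v \<in> U" "b \<in> U"
    and le: "le a v" "le v b" and ne: "a \<noteq> v" "v \<noteq> b"
  shows "0 < chain_rank le U v \<and> chain_rank le U v < card U - 1"
  using chain_rank_less[OF po ch in_U(1,2) le(1) ne(1)] chain_rank_less[OF po ch in_U(2,3) le(2) ne(2)]
    chain_rank_less_card[OF ch in_U(3)] by linarith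

section \<open>Nerves and their subcomplexes spanned by families of chains\<close>

lemma mono_map_le: "mono_map m n \<theta> \<Longrightarrow> i \<le> m \<Longrightarrow> \<theta> i \<le> n"
  unfolding mono_map_def by blast

lemma mono_map_mono: "mono_map m n \<theta> \<Longrightarrow> i \<le> j \<Longrightarrow> j \<le> m \<Longrightarrow> \<theta> i \<le> \<theta> j"
  unfolding mono_map_def by blast

lemma ssmap_simplex: "ssmap X Y f \<Longrightarrow> x \<in> ssimp X n \<Longrightarrow> f n x \<in> ssimp Y n"
  unfolding ssmap_def by blast

lemma ssmap_smap:
  "ssmap X Y f \<Longrightarrow> mono_map m n \<theta> \<Longrightarrow> x \<in> ssimp X n \<Longrightarrow> f m (smap X m n \<theta> x) = smap Y m n \<theta> (f n x)"
  unfolding ssmap_def by blast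

lemma ssmap_comp: "ssmap X Y f \<Longrightarrow> ssmap Y Z g \<Longrightarrow> ssmap X Z (\<lambda>m x. g m (f m x))"
  unfolding ssmap_def by simp

lemma nerve_simplex_iff:
  "\<sigma> \<in> ssimp (nerve Q le) m \<longleftrightarrow> (\<forall>i\<le>m. \<sigma> i \<in> Q) \<and>
     (\<forall>i j. i \<le> j \<longrightarrow> j \<le> m \<longrightarrow> le (\<sigma> i) (\<sigma> j)) \<and> (\<forall>i>m. \<sigma> i = undefined)"
  unfolding nerve_def by simp

lemma nerve_smap: "smap (nerve Q le) m n \<theta> \<sigma> = (\<lambda>i. if i \<le> m then \<sigma> (\<theta> i) else undefined)"
  unfolding nerve_def by simp

lemma Delta_simplex_iff:
  "\<rho> \<in> ssimp (Delta d) m \<longleftrightarrow> (\<forall>i\<le>m. \<rho> i \<le> d) \<and>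
     (\<forall>i j. i \<le> j \<longrightarrow> j \<le> m \<longrightarrow> \<rho> i \<le> \<rho> j) \<and> (\<forall>i>m. \<rho> i = undefined)"
  unfolding Delta_def nerve_simplex_iff by simp

lemma Delta_smap: "smap (Delta d) m n \<theta> \<rho> = (\<lambda>i. if i \<le> m then \<rho> (\<theta> i) else undefined)"
  unfolding Delta_def nerve_smap by simp

lemma horn_simplex_iff:
  "\<rho> \<in> ssimp (horn d k) m \<longleftrightarrow> \<rho> \<in> ssimp (Delta d) m \<and> (\<exists>j\<le>d. j \<noteq> k \<and> j \<notin> \<rho> ` {0..m})"
  unfolding horn_def subsset_def by simp

lemma horn_smap: "smap (horn d k) = smap (Delta d)"
  unfolding horn_def subsset_def by simp

lemma sprod_simplex_iff: "p \<in> ssimp (sprod X Y) m \<longleftrightarrow> fst p \<in> ssimp X m \<and> snd p \<in> ssimp Y m"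
  unfolding sprod_def by (cases p) auto

lemma sprod_smap: "smap (sprod X Y) m n \<theta> (x, y) = (smap X m n \<theta> x, smap Y m n \<theta> y)"
  unfolding sprod_def by simp

lemma nerve_smap_simplex:
  assumes \<sigma>: "\<sigma> \<in> ssimp (nerve Q le) n" and \<theta>: "mono_map m n \<theta>"
  shows "smap (nerve Q le) m n \<theta> \<sigma> \<in> ssimp (nerve Q le) m"
  using \<sigma> mono_map_le[OF \<theta>] mono_map_mono[OF \<theta>] unfolding nerve_simplex_iff nerve_smap by auto

lemma nerve_smap_image:
  "mono_map m n \<theta> \<Longrightarrow> smap (nerve Q le) m n \<theta> \<sigma> ` {0..m} \<subseteq> \<sigma> ` {0..n}"
  unfolding nerve_smap by (auto dest: mono_map_le)

lemma fin_chain_nerve_image: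
  assumes "\<sigma> \<in> ssimp (nerve Q le) m"
  shows "fin_chain Q le (\<sigma> ` {0..m})"
  unfolding fin_chain_def
proof (intro conjI ballI)
  fix x y assume "x \<in> \<sigma> ` {0..m}" "y \<in> \<sigma> ` {0..m}"
  then obtain i j where "i \<le> m" "j \<le> m" "x = \<sigma> i" "y = \<sigma> j" by auto
  then show "le x y \<or> le y x" using assms nat_le_linear[of i j] unfolding nerve_simplex_iff by blast
qed (use assms in \<open>auto simp: nerve_simplex_iff\<close>)

definition down_closed :: "'p set set \<Rightarrow> bool" where
  "down_closed F \<longleftrightarrow> (\<forall>U\<in>F. \<forall>V. V \<subseteq> U \<longrightarrow> V \<noteq> {} \<longrightarrow> V \<in> F)"

lemma down_closedD: "down_closed F \<Longrightarrow> U \<in> F \<Longrightarrow> V \<subseteq> U \<Longrightarrow> V \<noteq> {} \<Longrightarrow> V \<in> F"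
  unfolding down_closed_def by blast

definition faces_of :: "'p set set \<Rightarrow> 'p set set" where
  "faces_of T = {U. U \<noteq> {} \<and> (\<exists>\<tau>\<in>T. U \<subseteq> \<tau>)}"

lemma down_closed_Un_faces_of: "down_closed F \<Longrightarrow> down_closed (F \<union> faces_of T)"
  unfolding down_closed_def faces_of_def by blast

definition subnerve :: "'p set \<Rightarrow> ('p \<Rightarrow> 'p \<Rightarrow> bool) \<Rightarrow> 'p set set \<Rightarrow> (nat \<Rightarrow> 'p) sset" where
  "subnerve Q le F = subsset (nerve Q le) (\<lambda>m. {\<sigma> \<in> ssimp (nerve Q le) m. \<sigma> ` {0..m} \<in> F})"

lemma subnerve_simplex_iff:
  "\<sigma> \<in> ssimp (subnerve Q le F) m \<longleftrightarrow> \<sigma> \<in> ssimp (nerve Q le) m \<and> \<sigma> ` {0..m} \<in> F"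
  unfolding subnerve_def subsset_def by simp

lemma subnerve_smap: "smap (subnerve Q le F) = smap (nerve Q le)"
  unfolding subnerve_def subsset_def by simp

lemma subnerve_mono: "F \<subseteq> F' \<Longrightarrow> \<sigma> \<in> ssimp (subnerve Q le F) m \<Longrightarrow> \<sigma> \<in> ssimp (subnerve Q le F') m"
  unfolding subnerve_simplex_iff by blast

definition horn_faces :: "'p set \<Rightarrow> 'p \<Rightarrow> 'p set set" where
  "horn_faces \<tau> v = {U. U \<subseteq> \<tau> \<and> U \<noteq> {} \<and> (\<exists>w\<in>\<tau>. w \<noteq> v \<and> w \<notin> U)}"

section \<open>Extending maps on subnerves by filling horns\<close>

text \<open>A finite chain \<open>\<tau>\<close> is identified with \<open>[card \<tau> - 1]\<close> through \<open>chain_rank\<close>; simplices are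
  transported in both directions along this identification.\<close>

definition chain_simplex :: "('p \<Rightarrow> 'p \<Rightarrow> bool) \<Rightarrow> 'p set \<Rightarrow> nat \<Rightarrow> (nat \<Rightarrow> nat) \<Rightarrow> nat \<Rightarrow> 'p" where
  "chain_simplex le \<tau> m \<rho> = (\<lambda>i. if i \<le> m then chain_nth le \<tau> (\<rho> i) else undefined)"

definition rank_simplex :: "('p \<Rightarrow> 'p \<Rightarrow> bool) \<Rightarrow> 'p set \<Rightarrow> nat \<Rightarrow> (nat \<Rightarrow> 'p) \<Rightarrow> nat \<Rightarrow> nat" where
  "rank_simplex le \<tau> m \<sigma> = (\<lambda>i. if i \<le> m then chain_rank le \<tau> (\<sigma> i) else undefined)"

lemma chain_simplex_nerve:
  assumes po: "po_on Q le" and ch: "fin_chain Q le \<tau>" and \<rho>: "\<rho> \<in> ssimp (Delta (card \<tau> - 1)) m"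
  shows "chain_simplex le \<tau> m \<rho> \<in> ssimp (nerve Q le) m"
    and "chain_simplex le \<tau> m \<rho> ` {0..m} = chain_nth le \<tau> ` \<rho> ` {0..m}"
    and "chain_simplex le \<tau> m \<rho> ` {0..m} \<subseteq> \<tau>"
proof -
  have "card \<tau> > 0" using fin_chainD(2,3)[OF ch] by (simp add: card_gt_0_iff)
  then have \<rho>_less: "\<rho> i < card \<tau>" if "i \<le> m" for i using \<rho> that unfolding Delta_simplex_iff by force
  show "chain_simplex le \<tau> m \<rho> \<in> ssimp (nerve Q le) m"
    using chain_nth_in[OF po ch \<rho>_less] chain_nth_mono[OF po ch _ \<rho>_less] \<rho> fin_chainD(1)[OF ch]
    unfolding nerve_simplex_iff chain_simplex_def Delta_simplex_iff by auto
  show img: "chain_simplex le \<tau> m \<rho> ` {0..m} = chain_nth le \<tau> ` \<rho> ` {0..m}"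
    unfolding chain_simplex_def by auto
  show "chain_simplex le \<tau> m \<rho> ` {0..m} \<subseteq> \<tau>"
    unfolding img using chain_nth_in[OF po ch \<rho>_less] by auto
qed

lemma chain_simplex_subnerve:
  assumes po: "po_on Q le" and ch: "fin_chain Q le \<tau>" and v: "v \<in> \<tau>"
    and faces: "horn_faces \<tau> v \<subseteq> F"
    and \<rho>: "\<rho> \<in> ssimp (horn (card \<tau> - 1) (chain_rank le \<tau> v)) m"
  shows "chain_simplex le \<tau> m \<rho> \<in> ssimp (subnerve Q le F) m"
proof -
  have \<rho>\<Delta>: "\<rho> \<in> ssimp (Delta (card \<tau> - 1)) m" using \<rho> horn_simplex_iff by auto
  obtain j where j: "j \<le> card \<tau> - 1" "j \<noteq> chain_rank le \<tau> v" "j \<notin> \<rho> ` {0..m}"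
    using \<rho> horn_simplex_iff by auto
  have "card \<tau> > 0" using fin_chainD(2,3)[OF ch] by (simp add: card_gt_0_iff)
  then have j_less: "j < card \<tau>" using j(1) by linarith
  have \<rho>_less: "\<rho> i < card \<tau>" if "i \<le> m" for i
    using \<rho>\<Delta> that \<open>card \<tau> > 0\<close> unfolding Delta_simplex_iff by force
  note img = chain_simplex_nerve[OF po ch \<rho>\<Delta>]
  have "chain_nth le \<tau> j \<notin> chain_simplex le \<tau> m \<rho> ` {0..m}"
  proof
    assume "chain_nth le \<tau> j \<in> chain_simplex le \<tau> m \<rho> ` {0..m}"
    then obtain i where i: "i \<le> m" "chain_nth le \<tau> j = chain_nth le \<tau> (\<rho> i)" unfolding img(2) by auto
    then have "j = \<rho> i" using chain_rank_nth[OF po ch j_less] chain_rank_nth[OF po ch \<rho>_less] by metis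
    then show False using j(3) i(1) by auto
  qed
  moreover have "chain_nth le \<tau> j \<noteq> v" using j(2) chain_rank_nth[OF po ch j_less] by auto
  moreover have "chain_nth le \<tau> j \<in> \<tau>" using chain_nth_in[OF po ch j_less] .
  ultimately have "chain_simplex le \<tau> m \<rho> ` {0..m} \<in> horn_faces \<tau> v"
    unfolding horn_faces_def using img(3) by auto
  then show ?thesis using img(1) faces by (simp add: subnerve_simplex_iff subset_iff)
qed

lemma ssmap_horn_chain_simplex:
  assumes po: "po_on Q le" and g: "ssmap (subnerve Q le F) C g"
    and ch: "fin_chain Q le \<tau>" and v: "v \<in> \<tau>" and faces: "horn_faces \<tau> v \<subseteq> F"
  shows "ssmap (horn (card \<tau> - 1) (chain_rank le \<tau> v)) C (\<lambda>m \<rho>. g m (chain_simplex le \<tau> m \<rho>))"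
  unfolding ssmap_def
proof (intro conjI allI impI)
  fix n \<rho> assume "\<rho> \<in> ssimp (horn (card \<tau> - 1) (chain_rank le \<tau> v)) n"
  then show "g n (chain_simplex le \<tau> n \<rho>) \<in> ssimp C n"
    using ssmap_simplex[OF g chain_simplex_subnerve[OF po ch v faces]] by blast
next
  fix m n \<theta> \<rho> assume \<theta>: "mono_map m n \<theta>" and \<rho>: "\<rho> \<in> ssimp (horn (card \<tau> - 1) (chain_rank le \<tau> v)) n"
  have "chain_simplex le \<tau> m (smap (horn (card \<tau> - 1) (chain_rank le \<tau> v)) m n \<theta> \<rho>) =
      smap (subnerve Q le F) m n \<theta> (chain_simplex le \<tau> n \<rho>)"
    unfolding horn_smap Delta_smap subnerve_smap nerve_smap chain_simplex_def
    using mono_map_le[OF \<theta>] by (auto intro!: ext)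
  then show "g m (chain_simplex le \<tau> m (smap (horn (card \<tau> - 1) (chain_rank le \<tau> v)) m n \<theta> \<rho>)) =
      smap C m n \<theta> (g n (chain_simplex le \<tau> n \<rho>))"
    using ssmap_smap[OF g \<theta> chain_simplex_subnerve[OF po ch v faces \<rho>]] by simp
qed

lemma rank_simplex_Delta:
  assumes po: "po_on Q le" and ch: "fin_chain Q le \<tau>"
    and \<sigma>: "\<sigma> \<in> ssimp (nerve Q le) m" and sub: "\<sigma> ` {0..m} \<subseteq> \<tau>"
  shows "rank_simplex le \<tau> m \<sigma> \<in> ssimp (Delta (card \<tau> - 1)) m"
  unfolding Delta_simplex_iff rank_simplex_def
proof (intro conjI allI impI)
  fix i assume "i \<le> m"
  then show "(if i \<le> m then chain_rank le \<tau> (\<sigma> i) else undefined) \<le> card \<tau> - 1"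
    using chain_rank_less_card[OF ch] sub by fastforce
next
  fix i j assume ij: "i \<le> j" "j \<le> m"
  have "\<sigma> i \<in> \<tau>" "\<sigma> j \<in> \<tau>" "le (\<sigma> i) (\<sigma> j)" using ij sub \<sigma> unfolding nerve_simplex_iff by auto
  then show "(if i \<le> m then chain_rank le \<tau> (\<sigma> i) else undefined) \<le>
      (if j \<le> m then chain_rank le \<tau> (\<sigma> j) else undefined)"
    using chain_rank_mono[OF po ch] ij by auto
qed auto

lemma chain_simplex_rank_simplex:
  assumes po: "po_on Q le" and ch: "fin_chain Q le \<tau>"
    and \<sigma>: "\<sigma> \<in> ssimp (nerve Q le) m" and sub: "\<sigma> ` {0..m} \<subseteq> \<tau>"
  shows "chain_simplex le \<tau> m (rank_simplex le \<tau> m \<sigma>) = \<sigma>"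
proof
  fix i
  have "i \<le> m \<Longrightarrow> \<sigma> i \<in> \<tau>" using sub by auto
  then show "chain_simplex le \<tau> m (rank_simplex le \<tau> m \<sigma>) i = \<sigma> i"
    using chain_nth_rank[OF po ch] \<sigma> unfolding chain_simplex_def rank_simplex_def nerve_simplex_iff by auto
qed

lemma rank_simplex_horn:
  assumes po: "po_on Q le" and ch: "fin_chain Q le \<tau>" and v: "v \<in> \<tau>"
    and \<sigma>: "\<sigma> \<in> ssimp (nerve Q le) m" and face: "\<sigma> ` {0..m} \<in> horn_faces \<tau> v"
  shows "rank_simplex le \<tau> m \<sigma> \<in> ssimp (horn (card \<tau> - 1) (chain_rank le \<tau> v)) m"
proof -
  obtain w where w: "w \<in> \<tau>" "w \<noteq> v" "w \<notin> \<sigma> ` {0..m}" and sub: "\<sigma> ` {0..m} \<subseteq> \<tau>"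
    using face unfolding horn_faces_def by blast
  have inj: "inj_on (chain_rank le \<tau>) \<tau>" using bij_betw_chain_rank[OF po ch] by (rule bij_betw_imp_inj_on)
  have "chain_rank le \<tau> w \<notin> rank_simplex le \<tau> m \<sigma> ` {0..m}"
  proof
    assume "chain_rank le \<tau> w \<in> rank_simplex le \<tau> m \<sigma> ` {0..m}"
    then obtain i where i: "i \<le> m" "chain_rank le \<tau> w = chain_rank le \<tau> (\<sigma> i)"
      unfolding rank_simplex_def by auto
    moreover have "\<sigma> i \<in> \<tau>" using sub i(1) by auto
    ultimately have "w = \<sigma> i" using inj_onD[OF inj _ w(1)] by blast
    then show False using w(3) i(1) by auto
  qed
  moreover have "chain_rank le \<tau> w \<noteq> chain_rank le \<tau> v" using inj w v unfolding inj_on_def by blast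
  moreover have "chain_rank le \<tau> w \<le> card \<tau> - 1" using chain_rank_less_card[OF ch w(1)] by linarith
  ultimately show ?thesis
    using rank_simplex_Delta[OF po ch \<sigma> sub] unfolding horn_simplex_iff by blast
qed

lemma rank_simplex_smap:
  "mono_map m n \<theta> \<Longrightarrow>
    rank_simplex le \<tau> m (smap (nerve Q le) m n \<theta> \<sigma>) = smap (Delta d) m n \<theta> (rank_simplex le \<tau> n \<sigma>)"
  unfolding rank_simplex_def nerve_smap Delta_smap by (auto dest: mono_map_le intro!: ext)

definition covering_chain :: "'p set set \<Rightarrow> 'p set \<Rightarrow> 'p set" where
  "covering_chain T U = (THE \<tau>. \<tau> \<in> T \<and> U \<subseteq> \<tau>)"

definition extend_over ::
  "'p set set \<Rightarrow> ('p \<Rightarrow> 'p \<Rightarrow> bool) \<Rightarrow> (nat \<Rightarrow> (nat \<Rightarrow> 'p) \<Rightarrow> 'a) \<Rightarrow> 'p set set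
     \<Rightarrow> ('p set \<Rightarrow> nat \<Rightarrow> (nat \<Rightarrow> nat) \<Rightarrow> 'a) \<Rightarrow> nat \<Rightarrow> (nat \<Rightarrow> 'p) \<Rightarrow> 'a" where
  "extend_over F le g T H m \<sigma> =
     (if \<sigma> ` {0..m} \<in> F then g m \<sigma>
      else H (covering_chain T (\<sigma> ` {0..m})) m (rank_simplex le (covering_chain T (\<sigma> ` {0..m})) m \<sigma>))"

lemma extend_over_old: "\<sigma> ` {0..m} \<in> F \<Longrightarrow> extend_over F le g T H m \<sigma> = g m \<sigma>"
  unfolding extend_over_def by simp

lemma extend_over_new:
  assumes unique: "\<And>\<tau> \<tau>' U. \<tau> \<in> T \<Longrightarrow> \<tau>' \<in> T \<Longrightarrow> U \<subseteq> \<tau> \<Longrightarrow> U \<subseteq> \<tau>' \<Longrightarrow> U \<noteq> {} \<Longrightarrow> U \<notin> F \<Longrightarrow> \<tau> = \<tau>'"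
    and \<tau>: "\<tau> \<in> T" "\<sigma> ` {0..m} \<subseteq> \<tau>" and new: "\<sigma> ` {0..m} \<notin> F"
  shows "extend_over F le g T H m \<sigma> = H \<tau> m (rank_simplex le \<tau> m \<sigma>)"
proof -
  have "covering_chain T (\<sigma> ` {0..m}) = \<tau>"
    unfolding covering_chain_def
  proof (rule the_equality)
    fix \<tau>' assume "\<tau>' \<in> T \<and> \<sigma> ` {0..m} \<subseteq> \<tau>'"
    then show "\<tau>' = \<tau>" using unique[of \<tau>' \<tau> "\<sigma> ` {0..m}"] \<tau> new by simp
  qed (use \<tau> in simp)
  then show ?thesis unfolding extend_over_def using new by simp
qed

lemma horn_filler_old_face:
  assumes po: "po_on Q le" and ch: "fin_chain Q le \<tau>" and v: "v \<in> \<tau>"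
    and new: "\<tau> \<notin> F" "\<tau> - {v} \<notin> F"
    and H_horn: "\<And>m \<rho>. \<rho> \<in> ssimp (horn (card \<tau> - 1) (chain_rank le \<tau> v)) m \<Longrightarrow>
        H m \<rho> = g m (chain_simplex le \<tau> m \<rho>)"
    and \<sigma>: "\<sigma> \<in> ssimp (nerve Q le) m" and sub: "\<sigma> ` {0..m} \<subseteq> \<tau>" and old: "\<sigma> ` {0..m} \<in> F"
  shows "H m (rank_simplex le \<tau> m \<sigma>) = g m \<sigma>"
proof -
  have "\<sigma> ` {0..m} \<noteq> \<tau>" "\<sigma> ` {0..m} \<noteq> \<tau> - {v}" using new old by auto
  then obtain w where "w \<in> \<tau>" "w \<noteq> v" "w \<notin> \<sigma> ` {0..m}" using sub by blast
  then have "\<sigma> ` {0..m} \<in> horn_faces \<tau> v" using sub unfolding horn_faces_def by auto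
  then show ?thesis
    using H_horn[OF rank_simplex_horn[OF po ch v \<sigma>]] chain_simplex_rank_simplex[OF po ch \<sigma> sub] by simp
qed

lemma ssmap_extend_over:
  assumes po: "po_on Q le" and g: "ssmap (subnerve Q le F) C g" and dc: "down_closed F"
    and ch: "\<And>\<tau>. \<tau> \<in> T \<Longrightarrow> fin_chain Q le \<tau>"
    and v: "\<And>\<tau>. \<tau> \<in> T \<Longrightarrow> v \<tau> \<in> \<tau>"
    and new: "\<And>\<tau>. \<tau> \<in> T \<Longrightarrow> \<tau> \<notin> F" "\<And>\<tau>. \<tau> \<in> T \<Longrightarrow> \<tau> - {v \<tau>} \<notin> F"
    and faces: "\<And>\<tau>. \<tau> \<in> T \<Longrightarrow> horn_faces \<tau> (v \<tau>) \<subseteq> F"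
    and unique: "\<And>\<tau> \<tau>' U. \<tau> \<in> T \<Longrightarrow> \<tau>' \<in> T \<Longrightarrow> U \<subseteq> \<tau> \<Longrightarrow> U \<subseteq> \<tau>' \<Longrightarrow> U \<noteq> {} \<Longrightarrow> U \<notin> F \<Longrightarrow> \<tau> = \<tau>'"
    and H: "\<And>\<tau>. \<tau> \<in> T \<Longrightarrow> ssmap (Delta (card \<tau> - 1)) C (H \<tau>)"
    and H_horn: "\<And>\<tau> m \<rho>. \<tau> \<in> T \<Longrightarrow> \<rho> \<in> ssimp (horn (card \<tau> - 1) (chain_rank le \<tau> (v \<tau>))) m \<Longrightarrow>
        H \<tau> m \<rho> = g m (chain_simplex le \<tau> m \<rho>)"
  shows "ssmap (subnerve Q le (F \<union> faces_of T)) C (extend_over F le g T H)"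
proof -
  let ?G = "extend_over F le g T H"
  have new_eq: "?G m \<sigma> = H \<tau> m (rank_simplex le \<tau> m \<sigma>)"
    if "\<tau> \<in> T" "\<sigma> ` {0..m} \<subseteq> \<tau>" "\<sigma> ` {0..m} \<notin> F" for \<tau> m \<sigma>
    using unique that by (rule extend_over_new)
  show ?thesis unfolding ssmap_def
  proof (intro conjI allI impI)
    fix n \<sigma> assume "\<sigma> \<in> ssimp (subnerve Q le (F \<union> faces_of T)) n"
    then have \<sigma>: "\<sigma> \<in> ssimp (nerve Q le) n" and img: "\<sigma> ` {0..n} \<in> F \<union> faces_of T"
      by (simp_all add: subnerve_simplex_iff)
    show "?G n \<sigma> \<in> ssimp C n"
    proof (cases "\<sigma> ` {0..n} \<in> F")
      case True
      then show ?thesis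
        unfolding extend_over_old[OF True] using ssmap_simplex[OF g] \<sigma> by (simp add: subnerve_simplex_iff)
    next
      case False
      then obtain \<tau> where \<tau>: "\<tau> \<in> T" "\<sigma> ` {0..n} \<subseteq> \<tau>" using img unfolding faces_of_def by auto
      show ?thesis
        using new_eq[OF \<tau> False] ssmap_simplex[OF H[OF \<tau>(1)] rank_simplex_Delta[OF po ch[OF \<tau>(1)] \<sigma> \<tau>(2)]]
        by simp
    qed
  next
    fix m n \<theta> \<sigma> assume \<theta>: "mono_map m n \<theta>" and "\<sigma> \<in> ssimp (subnerve Q le (F \<union> faces_of T)) n"
    then have \<sigma>: "\<sigma> \<in> ssimp (nerve Q le) n" and img: "\<sigma> ` {0..n} \<in> F \<union> faces_of T"
      by (simp_all add: subnerve_simplex_iff)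
    let ?s = "smap (nerve Q le) m n \<theta> \<sigma>"
    have s: "?s \<in> ssimp (nerve Q le) m" by (rule nerve_smap_simplex[OF \<sigma> \<theta>])
    have s_img: "?s ` {0..m} \<subseteq> \<sigma> ` {0..n}" by (rule nerve_smap_image[OF \<theta>])
    have "?G m ?s = smap C m n \<theta> (?G n \<sigma>)"
    proof (cases "\<sigma> ` {0..n} \<in> F")
      case True
      have "?s ` {0..m} \<in> F" using down_closedD[OF dc True s_img] by simp
      then show ?thesis
        unfolding extend_over_old[OF True] extend_over_old[OF \<open>?s ` {0..m} \<in> F\<close>]
        using ssmap_smap[OF g \<theta>] \<sigma> True by (simp add: subnerve_simplex_iff subnerve_smap)
    next
      case False
      then obtain \<tau> where \<tau>: "\<tau> \<in> T" "\<sigma> ` {0..n} \<subseteq> \<tau>" using img unfolding faces_of_def by auto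
      have s_sub: "?s ` {0..m} \<subseteq> \<tau>" using s_img \<tau>(2) by auto
      have "H \<tau> m (rank_simplex le \<tau> m ?s) = H \<tau> m (smap (Delta (card \<tau> - 1)) m n \<theta> (rank_simplex le \<tau> n \<sigma>))"
        by (rule arg_cong[OF rank_simplex_smap[OF \<theta>]])
      also have "\<dots> = smap C m n \<theta> (H \<tau> n (rank_simplex le \<tau> n \<sigma>))"
        by (rule ssmap_smap[OF H[OF \<tau>(1)] \<theta> rank_simplex_Delta[OF po ch[OF \<tau>(1)] \<sigma> \<tau>(2)]])
      also have "\<dots> = smap C m n \<theta> (?G n \<sigma>)" using new_eq[OF \<tau> False] by simp
      finally have H_s: "H \<tau> m (rank_simplex le \<tau> m ?s) = smap C m n \<theta> (?G n \<sigma>)" .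
      show ?thesis
      proof (cases "?s ` {0..m} \<in> F")
        case True
        have "H \<tau> m (rank_simplex le \<tau> m ?s) = g m ?s"
          using po ch[OF \<tau>(1)] v[OF \<tau>(1)] new[OF \<tau>(1)] H_horn[OF \<tau>(1)] s s_sub True
          by (rule horn_filler_old_face)
        then show ?thesis using extend_over_old[OF True] H_s by simp
      next
        case False
        then show ?thesis using new_eq[OF \<tau>(1) s_sub False] H_s by simp
      qed
    qed
    then show "?G m (smap (subnerve Q le (F \<union> faces_of T)) m n \<theta> \<sigma>) = smap C m n \<theta> (?G n \<sigma>)"
      by (simp add: subnerve_smap)
  qed
qed

lemma quasicategory_fill_inner_horn:
  assumes "quasicategory C" and "ssmap (horn d k) C h" and "0 < k" "k < d"
  shows "\<exists>H. ssmap (Delta d) C H \<and> (\<forall>m \<rho>. \<rho> \<in> ssimp (horn d k) m \<longrightarrow> H m \<rho> = h m \<rho>)"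
  using assms unfolding quasicategory_def rlp_def by blast

lemma extend_by_inner_horn_fillers:
  assumes po: "po_on Q le" and qc: "quasicategory C"
    and g: "ssmap (subnerve Q le F) C g" and dc: "down_closed F"
    and ch: "\<And>\<tau>. \<tau> \<in> T \<Longrightarrow> fin_chain Q le \<tau>"
    and v: "\<And>\<tau>. \<tau> \<in> T \<Longrightarrow> v \<tau> \<in> \<tau>"
    and inner: "\<And>\<tau>. \<tau> \<in> T \<Longrightarrow> 0 < chain_rank le \<tau> (v \<tau>) \<and> chain_rank le \<tau> (v \<tau>) < card \<tau> - 1"
    and new: "\<And>\<tau>. \<tau> \<in> T \<Longrightarrow> \<tau> \<notin> F" "\<And>\<tau>. \<tau> \<in> T \<Longrightarrow> \<tau> - {v \<tau>} \<notin> F"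
    and faces: "\<And>\<tau>. \<tau> \<in> T \<Longrightarrow> horn_faces \<tau> (v \<tau>) \<subseteq> F"
    and unique: "\<And>\<tau> \<tau>' U. \<tau> \<in> T \<Longrightarrow> \<tau>' \<in> T \<Longrightarrow> U \<subseteq> \<tau> \<Longrightarrow> U \<subseteq> \<tau>' \<Longrightarrow> U \<noteq> {} \<Longrightarrow> U \<notin> F \<Longrightarrow> \<tau> = \<tau>'"
  obtains g' where "ssmap (subnerve Q le (F \<union> faces_of T)) C g'"
    and "\<And>m \<sigma>. \<sigma> \<in> ssimp (subnerve Q le F) m \<Longrightarrow> g' m \<sigma> = g m \<sigma>"
proof -
  define H where "H \<tau> = (SOME H. ssmap (Delta (card \<tau> - 1)) C H \<and>
      (\<forall>m \<rho>. \<rho> \<in> ssimp (horn (card \<tau> - 1) (chain_rank le \<tau> (v \<tau>))) m \<longrightarrow>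
         H m \<rho> = g m (chain_simplex le \<tau> m \<rho>)))" for \<tau>
  have H: "ssmap (Delta (card \<tau> - 1)) C (H \<tau>) \<and>
      (\<forall>m \<rho>. \<rho> \<in> ssimp (horn (card \<tau> - 1) (chain_rank le \<tau> (v \<tau>))) m \<longrightarrow>
         H \<tau> m \<rho> = g m (chain_simplex le \<tau> m \<rho>))" if \<tau>: "\<tau> \<in> T" for \<tau>
  proof -
    have "0 < chain_rank le \<tau> (v \<tau>)" "chain_rank le \<tau> (v \<tau>) < card \<tau> - 1" using inner[OF \<tau>] by auto
    from quasicategory_fill_inner_horn[OF qc ssmap_horn_chain_simplex[OF po g ch[OF \<tau>] v[OF \<tau>] faces[OF \<tau>]] this]
    show ?thesis unfolding H_def by (rule someI_ex)
  qed
  have "ssmap (subnerve Q le (F \<union> faces_of T)) C (extend_over F le g T H)"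
    by (rule ssmap_extend_over[OF po g dc ch v new faces unique]) (use H in auto)
  moreover have "extend_over F le g T H m \<sigma> = g m \<sigma>" if "\<sigma> \<in> ssimp (subnerve Q le F) m" for m \<sigma>
    using that by (intro extend_over_old) (simp add: subnerve_simplex_iff)
  ultimately show ?thesis using that by blast
qed

text \<open>Horns are filled in order of increasing \<open>r\<close>: the conditions on \<open>r\<close> guarantee that, at each
  stage, all faces of \<open>\<tau>\<close> other than \<open>\<tau>\<close> and \<open>\<tau> - {v \<tau>}\<close> are already present, and that distinct
  chains of the same stage do not share any new face.\<close>

lemma extend_by_ranked_inner_horns:
  fixes r :: "'p set \<Rightarrow> nat"
  assumes po: "po_on Q le" and qc: "quasicategory C"
    and g0: "ssmap (subnerve Q le D) C g0" and dc: "down_closed D"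
    and fin: "finite T"
    and ch: "\<And>\<tau>. \<tau> \<in> T \<Longrightarrow> fin_chain Q le \<tau>"
    and v: "\<And>\<tau>. \<tau> \<in> T \<Longrightarrow> v \<tau> \<in> \<tau>"
    and inner: "\<And>\<tau>. \<tau> \<in> T \<Longrightarrow> 0 < chain_rank le \<tau> (v \<tau>) \<and> chain_rank le \<tau> (v \<tau>) < card \<tau> - 1"
    and new: "\<And>\<tau>. \<tau> \<in> T \<Longrightarrow> \<tau> \<notin> D" "\<And>\<tau>. \<tau> \<in> T \<Longrightarrow> \<tau> - {v \<tau>} \<notin> D"
    and faces: "\<And>\<tau> w. \<tau> \<in> T \<Longrightarrow> w \<in> \<tau> \<Longrightarrow> w \<noteq> v \<tau> \<Longrightarrow>
        \<tau> - {w} \<in> D \<or> (\<exists>\<tau>'\<in>T. r \<tau>' < r \<tau> \<and> \<tau> - {w} \<subseteq> \<tau>')"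
    and r_pivot_face: "\<And>\<tau> \<tau>'. \<tau> \<in> T \<Longrightarrow> \<tau>' \<in> T \<Longrightarrow> \<tau> - {v \<tau>} \<subseteq> \<tau>' \<Longrightarrow> \<tau>' \<noteq> \<tau> \<Longrightarrow> r \<tau> < r \<tau>'"
    and r_mono: "\<And>\<tau> \<tau>'. \<tau> \<in> T \<Longrightarrow> \<tau>' \<in> T \<Longrightarrow> \<tau> \<subseteq> \<tau>' \<Longrightarrow> \<tau> \<noteq> \<tau>' \<Longrightarrow> r \<tau> < r \<tau>'"
  obtains g where "ssmap (subnerve Q le (D \<union> faces_of T)) C g"
    and "\<And>m \<sigma>. \<sigma> \<in> ssimp (subnerve Q le D) m \<Longrightarrow> g m \<sigma> = g0 m \<sigma>"
proof -
  define FN where "FN N = D \<union> faces_of {\<tau>\<in>T. r \<tau> < N}" for N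
  have stage: "\<exists>g. ssmap (subnerve Q le (FN N)) C g \<and> (\<forall>m \<sigma>. \<sigma> \<in> ssimp (subnerve Q le D) m \<longrightarrow> g m \<sigma> = g0 m \<sigma>)"
    for N
  proof (induction N)
    case 0
    have "FN 0 = D" unfolding FN_def faces_of_def by auto
    then show ?case using g0 by auto
  next
    case (Suc N)
    then obtain g where g: "ssmap (subnerve Q le (FN N)) C g"
      and g_D: "\<forall>m \<sigma>. \<sigma> \<in> ssimp (subnerve Q le D) m \<longrightarrow> g m \<sigma> = g0 m \<sigma>" by blast
    let ?T = "{\<tau>\<in>T. r \<tau> = N}"
    have in_FN: "U \<in> FN N" if "U \<subseteq> \<tau>'" "U \<noteq> {}" "\<tau>' \<in> T" "r \<tau>' < N" for U \<tau>'
      using that unfolding FN_def faces_of_def by blast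
    have not_in_FN: "X \<notin> FN N" if "X \<notin> D" "\<And>\<tau>'. \<tau>' \<in> T \<Longrightarrow> X \<subseteq> \<tau>' \<Longrightarrow> N \<le> r \<tau>'" for X
      using that unfolding FN_def faces_of_def by force
    have new_N: "\<tau> \<notin> FN N" "\<tau> - {v \<tau>} \<notin> FN N" if \<tau>: "\<tau> \<in> ?T" for \<tau>
      using new not_in_FN r_mono r_pivot_face \<tau> by (metis (mono_tags, lifting) mem_Collect_eq nat_less_le not_le)+
    have faces_N: "horn_faces \<tau> (v \<tau>) \<subseteq> FN N" if \<tau>: "\<tau> \<in> ?T" for \<tau>
    proof
      fix U assume "U \<in> horn_faces \<tau> (v \<tau>)"
      then obtain w where U: "U \<subseteq> \<tau> - {w}" "U \<noteq> {}" and w: "w \<in> \<tau>" "w \<noteq> v \<tau>"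
        unfolding horn_faces_def by blast
      have "\<tau> - {w} \<in> D \<or> (\<exists>\<tau>'\<in>T. r \<tau>' < r \<tau> \<and> \<tau> - {w} \<subseteq> \<tau>')" using faces[OF _ w] \<tau> by auto
      then show "U \<in> FN N"
      proof (elim disjE bexE conjE)
        assume "\<tau> - {w} \<in> D"
        then show ?thesis using down_closedD[OF dc _ U] unfolding FN_def by blast
      next
        fix \<tau>' assume "\<tau>' \<in> T" "r \<tau>' < r \<tau>" "\<tau> - {w} \<subseteq> \<tau>'"
        then show ?thesis using in_FN[of U \<tau>'] U \<tau> by auto
      qed
    qed
    have unique_N: "\<tau> = \<tau>'"
      if \<tau>: "\<tau> \<in> ?T" "\<tau>' \<in> ?T" and U: "U \<subseteq> \<tau>" "U \<subseteq> \<tau>'" "U \<noteq> {}" "U \<notin> FN N" for \<tau> \<tau>' U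
    proof (rule ccontr)
      assume ne: "\<tau> \<noteq> \<tau>'"
      have "U \<notin> horn_faces \<tau> (v \<tau>)" using faces_N[OF \<tau>(1)] U(4) by blast
      then have "\<tau> - {v \<tau>} \<subseteq> \<tau>'" using U unfolding horn_faces_def by blast
      then show False using r_pivot_face[of \<tau> \<tau>'] ne \<tau> by auto
    qed
    obtain g' where g': "ssmap (subnerve Q le (FN N \<union> faces_of ?T)) C g'"
      and g'_g: "\<And>m \<sigma>. \<sigma> \<in> ssimp (subnerve Q le (FN N)) m \<Longrightarrow> g' m \<sigma> = g m \<sigma>"
      by (rule extend_by_inner_horn_fillers[OF po qc g, of ?T v])
        (use down_closed_Un_faces_of[OF dc] ch v inner new_N faces_N unique_N in \<open>auto simp: FN_def\<close>)
    have "FN N \<union> faces_of ?T = FN (Suc N)"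
      unfolding FN_def faces_of_def by (auto simp: less_Suc_eq)
    moreover have "g' m \<sigma> = g0 m \<sigma>" if "\<sigma> \<in> ssimp (subnerve Q le D) m" for m \<sigma>
      using g'_g[OF subnerve_mono[OF _ that]] g_D that unfolding FN_def by auto
    ultimately show ?case using g' by auto
  qed
  have "r \<tau> < Suc (\<Sum>\<tau>\<in>T. r \<tau>)" if "\<tau> \<in> T" for \<tau>
    using member_le_sum[of \<tau> T r] that fin by auto
  then have "FN (Suc (\<Sum>\<tau>\<in>T. r \<tau>)) = D \<union> faces_of T" unfolding FN_def faces_of_def by blast
  then show ?thesis using stage[of "Suc (\<Sum>\<tau>\<in>T. r \<tau>)"] that by auto
qed

section \<open>The cylinder on \<open>L\<^sup>n\<^sub>k\<close> with one vertex removed\<close>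

text \<open>Chains are the same for
  the product order and its opposite; \<open>le_cyl_dual True\<close> is the order relevant for \<open>R\<^sup>n\<^sub>k\<close>.\<close>

definition le_cyl :: "nat set \<times> nat \<Rightarrow> nat set \<times> nat \<Rightarrow> bool" where
  "le_cyl x y \<longleftrightarrow> fst x \<subseteq> fst y \<and> snd x \<le> snd y"

definition le_cyl_dual :: "bool \<Rightarrow> nat set \<times> nat \<Rightarrow> nat set \<times> nat \<Rightarrow> bool" where
  "le_cyl_dual dual x y = (if dual then le_cyl y x else le_cyl x y)"

definition cyl :: "nat \<Rightarrow> nat \<Rightarrow> (nat set \<times> nat) set" where
  "cyl n k = {x. fst x \<in> subsets_with n k \<and> snd x \<le> 1 \<and> x \<noteq> ({0..n}, 0)}"

abbreviation cyl_top :: "nat \<Rightarrow> nat set \<times> nat" where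
  "cyl_top n \<equiv> ({0..n}, 1)"

text \<open>The chains of \<open>(LJ\<^sup>n\<^sub>k \<times> [1]) \<union> (L\<^sup>n\<^sub>k \<times> {1})\<close>, where the map is given by the homotopy and the lift.\<close>

definition cyl_base :: "nat \<Rightarrow> nat \<Rightarrow> (nat set \<times> nat) set set" where
  "cyl_base n k = {U. fin_chain (cyl n k) le_cyl U \<and> (cyl_top n \<notin> U \<or> (\<forall>x\<in>U. snd x = 1))}"

definition cyl_fill :: "nat \<Rightarrow> nat \<Rightarrow> (nat set \<times> nat) set set" where
  "cyl_fill n k = {U. fin_chain (cyl n k) le_cyl U \<and> cyl_top n \<in> U \<and> (\<exists>A. (A, 0) \<in> U \<and> (A, 1) \<in> U)}"

definition pivot :: "(nat set \<times> nat) set \<Rightarrow> nat set \<times> nat" where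
  "pivot U = (SOME x. \<exists>A. x = (A, 1) \<and> (A, 0) \<in> U \<and> (A, 1) \<in> U)"

definition fill_rank :: "(nat set \<times> nat) set \<Rightarrow> nat" where
  "fill_rank U = card U * card U + card {x\<in>U. snd x = 0}"

lemma fin_chain_le_cyl_dual_iff: "fin_chain Q (le_cyl_dual dual) U \<longleftrightarrow> fin_chain Q le_cyl U"
  unfolding fin_chain_def le_cyl_dual_def by auto

lemma po_le_cyl_dual: "po_on Q (le_cyl_dual dual)"
  unfolding po_on_def le_cyl_dual_def le_cyl_def by (cases dual) (auto intro: prod_eqI)

lemma cyl_iff: "x \<in> cyl n k \<longleftrightarrow> fst x \<subseteq> {0..n} \<and> k \<in> fst x \<and> snd x \<le> 1 \<and> x \<noteq> ({0..n}, 0)"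
  unfolding cyl_def subsets_with_def by auto

lemma cyl_top_in_cyl: "k \<le> n \<Longrightarrow> cyl_top n \<in> cyl n k"
  unfolding cyl_iff by auto

lemma finite_cyl: "finite (cyl n k)"
proof (rule finite_subset)
  show "cyl n k \<subseteq> Pow {0..n} \<times> {0..1}"
  proof
    fix x assume "x \<in> cyl n k"
    then show "x \<in> Pow {0..n} \<times> {0..1}" unfolding cyl_iff by (cases x) auto
  qed
qed auto

lemma cyl_level: "x \<in> cyl n k \<Longrightarrow> x = (fst x, 0) \<or> x = (fst x, 1)"
  unfolding cyl_iff by (cases x) auto

lemma cyl_level0_ne_top: "(A, 0) \<in> cyl n k \<Longrightarrow> A \<noteq> {0..n}"
  unfolding cyl_iff by auto

lemma cyl_chain_pair_unique:
  assumes ch: "fin_chain Q le_cyl U" and A: "(A, 0) \<in> U" "(A, 1) \<in> U" and B: "(B, 0) \<in> U" "(B, 1) \<in> U"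
  shows "A = B"
  using fin_chainD(4)[OF ch A(1) B(2)] fin_chainD(4)[OF ch B(1) A(2)] unfolding le_cyl_def by auto

lemma pivot_eq:
  assumes ch: "fin_chain Q le_cyl U" and A: "(A, 0) \<in> U" "(A, 1) \<in> U"
  shows "pivot U = (A, 1)"
proof -
  have "\<exists>B. pivot U = (B, 1) \<and> (B, 0) \<in> U \<and> (B, 1) \<in> U"
    unfolding pivot_def by (rule someI_ex) (use A in blast)
  then show ?thesis using cyl_chain_pair_unique[OF ch A] by auto
qed

lemma cyl_fillE:
  assumes "\<tau> \<in> cyl_fill n k"
  obtains A where "fin_chain (cyl n k) le_cyl \<tau>" "cyl_top n \<in> \<tau>" "(A, 0) \<in> \<tau>" "(A, 1) \<in> \<tau>"
    "pivot \<tau> = (A, 1)" "A \<noteq> {0..n}"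
proof -
  obtain A where A: "fin_chain (cyl n k) le_cyl \<tau>" "cyl_top n \<in> \<tau>" "(A, 0) \<in> \<tau>" "(A, 1) \<in> \<tau>"
    using assms unfolding cyl_fill_def by blast
  then show ?thesis
    using that pivot_eq[OF A(1) A(3,4)] cyl_level0_ne_top fin_chainD(1)[OF A(1)] by blast
qed

lemma pivot_in: "\<tau> \<in> cyl_fill n k \<Longrightarrow> pivot \<tau> \<in> \<tau>"
  by (erule cyl_fillE) simp

lemma finite_cyl_fill: "finite (cyl_fill n k)"
  by (rule finite_subset[of _ "Pow (cyl n k)"]) (auto simp: cyl_fill_def fin_chain_def finite_cyl)

lemma card_cyl_fill: "\<tau> \<in> cyl_fill n k \<Longrightarrow> 3 \<le> card \<tau>"
proof (erule cyl_fillE)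
  fix A assume A: "fin_chain (cyl n k) le_cyl \<tau>" "cyl_top n \<in> \<tau>" "(A, 0) \<in> \<tau>" "(A, 1) \<in> \<tau>" "A \<noteq> {0..n}"
  then have "card {(A, 0), (A, 1), cyl_top n} \<le> card \<tau>" using fin_chainD(2)[OF A(1)] by (intro card_mono) auto
  then show "3 \<le> card \<tau>" using A(5) by simp
qed

lemma cyl_fill_not_base: "\<tau> \<in> cyl_fill n k \<Longrightarrow> \<tau> \<notin> cyl_base n k"
  unfolding cyl_fill_def cyl_base_def by force

lemma cyl_fill_pivot_face_not_base: "\<tau> \<in> cyl_fill n k \<Longrightarrow> \<tau> - {pivot \<tau>} \<notin> cyl_base n k"
  by (erule cyl_fillE) (force simp: cyl_base_def)

lemma cyl_fill_pivot_face_not_fill: "\<tau> \<in> cyl_fill n k \<Longrightarrow> \<tau> - {pivot \<tau>} \<notin> cyl_fill n k"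
proof (erule cyl_fillE)
  fix A assume A: "fin_chain (cyl n k) le_cyl \<tau>" "(A, 0) \<in> \<tau>" "(A, 1) \<in> \<tau>" "pivot \<tau> = (A, 1)"
  show "\<tau> - {pivot \<tau>} \<notin> cyl_fill n k"
  proof
    assume "\<tau> - {pivot \<tau>} \<in> cyl_fill n k"
    then obtain B where "(B, 0) \<in> \<tau> - {pivot \<tau>}" "(B, 1) \<in> \<tau> - {pivot \<tau>}" unfolding cyl_fill_def by blast
    then show False using cyl_chain_pair_unique[OF A(1) A(2,3)] A(4) by auto
  qed
qed

lemma down_closed_cyl_base: "down_closed (cyl_base n k)"
  unfolding down_closed_def cyl_base_def using fin_chain_subset by blast

text \<open>Add \<open>(A, 1)\<close> for the largest \<open>(A, 0)\<close> in the chain.\<close>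

lemma cyl_fill_cover:
  assumes ch: "fin_chain (cyl n k) le_cyl U" and not_base: "U \<notin> cyl_base n k"
  obtains A where "(A, 0) \<in> U" and "insert (A, 1) U \<in> cyl_fill n k"
proof -
  have top: "cyl_top n \<in> U" and "\<exists>x\<in>U. snd x \<noteq> 1" using not_base ch unfolding cyl_base_def by auto
  then obtain B0 where "(B0, 0) \<in> U" using cyl_level fin_chainD(1)[OF ch] by (metis snd_conv subsetD)
  let ?\<A> = "{B. (B, 0) \<in> U}"
  have "?\<A> \<subseteq> fst ` U" by force
  then have "finite ?\<A>" using fin_chainD(2)[OF ch] finite_subset by blast
  moreover have "?\<A> \<noteq> {}" using \<open>(B0, 0) \<in> U\<close> by blast
  moreover have "subset.chain UNIV ?\<A>"
    unfolding subset_chain_def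
  proof (intro conjI ballI)
    fix X Y assume "X \<in> ?\<A>" "Y \<in> ?\<A>"
    then show "X \<subseteq> Y \<or> Y \<subseteq> X" using fin_chainD(4)[OF ch, of "(X, 0)" "(Y, 0)"] unfolding le_cyl_def by auto
  qed simp
  ultimately have A0: "(\<Union>?\<A>, 0) \<in> U" using Union_in_chain by blast
  define A where "A = \<Union>?\<A>"
  have A0': "(A, 0) \<in> U" using A0 unfolding A_def .
  have "(A, 0) \<in> cyl n k" using fin_chainD(1)[OF ch] A0' by blast
  then have A1: "(A, 1) \<in> cyl n k" unfolding cyl_iff by auto
  have cmp: "le_cyl (A, 1) z \<or> le_cyl z (A, 1)" if z: "z \<in> U" for z
  proof (cases "snd z = 0")
    case True
    then have "fst z \<in> ?\<A>" using z by (metis prod.collapse mem_Collect_eq)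
    then show ?thesis using True unfolding le_cyl_def A_def by auto
  next
    case False
    then have "snd z = 1" using cyl_level[of z] fin_chainD(1)[OF ch] z by (metis snd_conv subsetD)
    then show ?thesis using fin_chainD(4)[OF ch A0' z] unfolding le_cyl_def by auto
  qed
  have "fin_chain (cyl n k) le_cyl (insert (A, 1) U)"
    unfolding fin_chain_def
  proof (intro conjI ballI)
    fix x y assume "x \<in> insert (A, 1) U" "y \<in> insert (A, 1) U"
    moreover have "le_cyl (A, 1) (A, 1)" by (simp add: le_cyl_def)
    ultimately show "le_cyl x y \<or> le_cyl y x" using cmp fin_chainD(4)[OF ch] by blast
  qed (use ch A1 in \<open>auto simp: fin_chain_def\<close>)
  then have "insert (A, 1) U \<in> cyl_fill n k" using top A0' unfolding cyl_fill_def by auto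
  then show ?thesis using that A0' by blast
qed

lemma fill_rank_less_card:
  assumes "finite \<tau>" and "card \<tau> < card \<tau>'"
  shows "fill_rank \<tau> < fill_rank \<tau>'"
proof -
  have "card {x\<in>\<tau>. snd x = 0} \<le> card \<tau>" using assms(1) by (intro card_mono) auto
  moreover have "Suc (card \<tau>) * Suc (card \<tau>) \<le> card \<tau>' * card \<tau>'" using assms(2) by (intro mult_le_mono) auto
  ultimately show ?thesis unfolding fill_rank_def by simp
qed

lemma fill_rank_psubset:
  assumes "\<tau> \<in> cyl_fill n k" "\<tau>' \<in> cyl_fill n k" "\<tau> \<subseteq> \<tau>'" "\<tau> \<noteq> \<tau>'"
  shows "fill_rank \<tau> < fill_rank \<tau>'"
proof -
  have "finite \<tau>'" "finite \<tau>" using assms(1,2) unfolding cyl_fill_def fin_chain_def by auto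
  then show ?thesis using assms(3,4) by (intro fill_rank_less_card psubset_card_mono) auto
qed

lemma cyl_fill_face:
  assumes \<tau>: "\<tau> \<in> cyl_fill n k" and w: "w \<in> \<tau>" "w \<noteq> pivot \<tau>"
  shows "\<tau> - {w} \<in> cyl_base n k \<or> (\<exists>\<tau>'\<in>cyl_fill n k. fill_rank \<tau>' < fill_rank \<tau> \<and> \<tau> - {w} \<subseteq> \<tau>')"
proof -
  obtain A where A: "fin_chain (cyl n k) le_cyl \<tau>" "cyl_top n \<in> \<tau>" "(A, 0) \<in> \<tau>" "(A, 1) \<in> \<tau>"
    "pivot \<tau> = (A, 1)" "A \<noteq> {0..n}" using \<tau> by (rule cyl_fillE)
  have fin: "finite \<tau>" using fin_chainD(2)[OF A(1)] .
  have ch_w: "fin_chain (cyl n k) le_cyl (\<tau> - {w})"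
    by (rule fin_chain_subset[OF A(1)]) (use A(4,5) w(2) in auto)
  have card_w: "Suc (card (\<tau> - {w})) = card \<tau>" by (rule card_Suc_Diff1[OF fin w(1)])
  consider "w = cyl_top n" | "w = (A, 0)" | "w \<noteq> cyl_top n" "w \<noteq> (A, 0)" by blast
  then show ?thesis
  proof cases
    case 1
    then show ?thesis unfolding cyl_base_def using ch_w by blast
  next
    case 2
    show ?thesis
    proof (cases "\<tau> - {w} \<in> cyl_base n k")
      case False
      then obtain B where B: "(B, 0) \<in> \<tau> - {w}" and \<tau>': "insert (B, 1) (\<tau> - {w}) \<in> cyl_fill n k"
        using cyl_fill_cover[OF ch_w] by blast
      let ?\<tau>' = "insert (B, 1) (\<tau> - {w})"
      have lvl: "{x\<in>?\<tau>'. snd x = 0} \<subseteq> {x\<in>\<tau>. snd x = 0} - {(A, 0)}" using 2 by auto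
      have "card {x\<in>?\<tau>'. snd x = 0} \<le> card ({x\<in>\<tau>. snd x = 0} - {(A, 0)})"
        using fin by (intro card_mono[OF _ lvl]) auto
      also have "\<dots> < card {x\<in>\<tau>. snd x = 0}" using fin A(3) by (intro card_Diff1_less) auto
      finally have "card {x\<in>?\<tau>'. snd x = 0} < card {x\<in>\<tau>. snd x = 0}" .
      moreover have "card ?\<tau>' \<le> card \<tau>" using card_w fin by (simp add: card_insert_if)
      then have "card ?\<tau>' * card ?\<tau>' \<le> card \<tau> * card \<tau>" using mult_le_mono by blast
      ultimately have "fill_rank ?\<tau>' < fill_rank \<tau>" unfolding fill_rank_def by linarith
      then show ?thesis using \<tau>' by blast
    qed simp
  next
    case 3
    moreover have "(A, 1) \<noteq> w" using w(2) A(5) by auto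
    ultimately have "\<tau> - {w} \<in> cyl_fill n k" unfolding cyl_fill_def using ch_w A(2,3,4) by blast
    moreover have "fill_rank (\<tau> - {w}) < fill_rank \<tau>" using card_w fin by (intro fill_rank_less_card) auto
    ultimately show ?thesis by blast
  qed
qed

lemma cyl_fill_pivot_exchange:
  assumes \<tau>: "\<tau> \<in> cyl_fill n k" and \<tau>': "\<tau>' \<in> cyl_fill n k"
    and ins: "insert x (\<tau> - {pivot \<tau>}) = \<tau>'" and x: "x \<noteq> pivot \<tau>"
  shows "snd x = 0"
proof (rule ccontr)
  assume "snd x \<noteq> 0"
  obtain A where A: "fin_chain (cyl n k) le_cyl \<tau>" "(A, 0) \<in> \<tau>" "(A, 1) \<in> \<tau>" "pivot \<tau> = (A, 1)"
    using \<tau> by (rule cyl_fillE)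
  have ch': "fin_chain (cyl n k) le_cyl \<tau>'" using \<tau>' unfolding cyl_fill_def by auto
  have "snd x = 1" using \<open>snd x \<noteq> 0\<close> cyl_level[of x] fin_chainD(1)[OF ch'] ins by (metis insertI1 snd_conv subsetD)
  obtain B where B: "(B, 0) \<in> \<tau>'" "(B, 1) \<in> \<tau>'" using \<tau>' unfolding cyl_fill_def by blast
  have "(B, 1) = x"
  proof (rule ccontr)
    assume "(B, 1) \<noteq> x"
    moreover have "(B, 0) \<noteq> x" using \<open>snd x = 1\<close> by auto
    ultimately have "(B, 0) \<in> \<tau> - {(A, 1)}" "(B, 1) \<in> \<tau> - {(A, 1)}" using B ins A(4) by auto
    then show False using cyl_chain_pair_unique[OF A(1) A(2,3)] by auto
  qed
  have "(B, 0) \<in> \<tau>" using B(1) \<open>(B, 1) = x\<close> ins by auto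
  then have "B \<subseteq> A" using fin_chainD(4)[OF A(1) _ A(3), of "(B, 0)"] unfolding le_cyl_def by auto
  moreover have "(A, 0) \<in> \<tau>'" using ins A(2,4) by auto
  then have "A \<subseteq> B" using fin_chainD(4)[OF ch' _ B(2), of "(A, 0)"] unfolding le_cyl_def by auto
  ultimately show False using \<open>(B, 1) = x\<close> x A(4) by auto
qed

lemma fill_rank_pivot_face:
  assumes \<tau>: "\<tau> \<in> cyl_fill n k" and \<tau>': "\<tau>' \<in> cyl_fill n k"
    and sub: "\<tau> - {pivot \<tau>} \<subseteq> \<tau>'" and ne: "\<tau>' \<noteq> \<tau>"
  shows "fill_rank \<tau> < fill_rank \<tau>'"
proof -
  obtain A where A: "fin_chain (cyl n k) le_cyl \<tau>" "(A, 0) \<in> \<tau>" "(A, 1) \<in> \<tau>" "pivot \<tau> = (A, 1)"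
    using \<tau> by (rule cyl_fillE)
  have ch': "fin_chain (cyl n k) le_cyl \<tau>'" using \<tau>' unfolding cyl_fill_def by auto
  have fin: "finite \<tau>" "finite \<tau>'" using fin_chainD(2) A(1) ch' by auto
  let ?R = "\<tau> - {(A, 1)}"
  have sub': "?R \<subseteq> \<tau>'" using sub A(4) by simp
  have card_R: "Suc (card ?R) = card \<tau>" by (rule card_Suc_Diff1[OF fin(1) A(3)])
  have "card ?R \<le> card \<tau>'" using card_mono[OF fin(2) sub'] .
  then consider "card \<tau> < card \<tau>'" | "card \<tau>' = card ?R" | "card \<tau>' = card \<tau>" using card_R by linarith
  then show ?thesis
  proof cases
    case 1
    then show ?thesis using fill_rank_less_card fin by blast
  next
    case 2
    then have "?R = \<tau>'" using card_subset_eq[OF fin(2) sub'] by simp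
    then show ?thesis using cyl_fill_pivot_face_not_fill[OF \<tau>] \<tau>' A(4) by simp
  next
    case 3
    have "\<not> \<tau>' \<subseteq> ?R" using card_mono[OF _ , of ?R \<tau>'] fin 3 card_R by auto
    then obtain x where x: "x \<in> \<tau>'" "x \<notin> ?R" by blast
    have ins: "insert x ?R = \<tau>'"
      using x sub' fin 3 card_R by (intro card_subset_eq[OF fin(2)]) (auto simp: card_insert_if)
    have "x \<noteq> (A, 1)" using ins ne A(3) by auto
    then have x_new: "x \<notin> \<tau>" using x by auto
    have "snd x = 0" using cyl_fill_pivot_exchange[OF \<tau> \<tau>'] ins \<open>x \<noteq> (A, 1)\<close> A(4) by simp
    then have "{y\<in>\<tau>'. snd y = 0} = insert x {y\<in>\<tau>. snd y = 0}" using ins[symmetric] by auto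
    then have "card {y\<in>\<tau>'. snd y = 0} = Suc (card {y\<in>\<tau>. snd y = 0})" using x_new fin by simp
    then show ?thesis unfolding fill_rank_def using 3 by simp
  qed
qed

lemma pivot_rank_inner:
  assumes "\<tau> \<in> cyl_fill n k"
  shows "0 < chain_rank (le_cyl_dual dual) \<tau> (pivot \<tau>) \<and> chain_rank (le_cyl_dual dual) \<tau> (pivot \<tau>) < card \<tau> - 1"
proof -
  obtain A where A: "fin_chain (cyl n k) le_cyl \<tau>" "cyl_top n \<in> \<tau>" "(A, 0) \<in> \<tau>" "(A, 1) \<in> \<tau>"
    "pivot \<tau> = (A, 1)" "A \<noteq> {0..n}" using assms by (rule cyl_fillE)
  have ch: "fin_chain (cyl n k) (le_cyl_dual dual) \<tau>" using A(1) fin_chain_le_cyl_dual_iff by blast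
  have "(A, 1) \<in> cyl n k" using fin_chainD(1)[OF A(1)] A(4) by blast
  then have "A \<subseteq> {0..n}" unfolding cyl_iff by auto
  then have le: "le_cyl (A, 0) (A, 1)" "le_cyl (A, 1) (cyl_top n)" unfolding le_cyl_def by auto
  note inner = chain_rank_inner[OF po_le_cyl_dual ch]
  show ?thesis
  proof (cases dual)
    case False
    then show ?thesis using inner[OF A(3,4,2)] le A(5,6) by (simp add: le_cyl_dual_def)
  next
    case True
    then show ?thesis using inner[OF A(2,4,3)] le A(5,6) by (simp add: le_cyl_dual_def)
  qed
qed

definition cyl_triangle :: "nat \<Rightarrow> nat set \<Rightarrow> (nat set \<times> nat) set" where
  "cyl_triangle n A = {(A, 0), (A, 1), cyl_top n}"

lemma cyl_triangle_in_cyl_fill: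
  assumes "k \<le> n" and A: "(A, 0) \<in> cyl n k"
  shows "cyl_triangle n A \<in> cyl_fill n k" and "card (cyl_triangle n A) = 3"
proof -
  have "A \<subseteq> {0..n}" "(A, 1) \<in> cyl n k" using A unfolding cyl_iff by auto
  then have "fin_chain (cyl n k) le_cyl (cyl_triangle n A)"
    unfolding fin_chain_def cyl_triangle_def using A cyl_top_in_cyl[OF assms(1)] by (auto simp: le_cyl_def)
  then show "cyl_triangle n A \<in> cyl_fill n k" unfolding cyl_fill_def cyl_triangle_def by auto
  show "card (cyl_triangle n A) = 3" using cyl_level0_ne_top[OF A] unfolding cyl_triangle_def by auto
qed

lemma cyl_fill_card_3E:
  assumes \<tau>: "\<tau> \<in> cyl_fill n k" and card: "card \<tau> = 3"
  obtains A where "\<tau> = cyl_triangle n A" "pivot \<tau> = (A, 1)" "A \<noteq> {0..n}"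
proof -
  obtain A where A: "fin_chain (cyl n k) le_cyl \<tau>" "cyl_top n \<in> \<tau>" "(A, 0) \<in> \<tau>" "(A, 1) \<in> \<tau>"
    "pivot \<tau> = (A, 1)" "A \<noteq> {0..n}" using \<tau> by (rule cyl_fillE)
  have "cyl_triangle n A = \<tau>"
    using A card fin_chainD(2)[OF A(1)] unfolding cyl_triangle_def by (intro card_subset_eq) auto
  then show ?thesis using that A(5,6) by blast
qed

lemma horn_faces_cyl_triangle:
  assumes "\<tau> \<in> cyl_fill n k" and "card \<tau> = 3"
  shows "horn_faces \<tau> (pivot \<tau>) \<subseteq> cyl_base n k"
proof
  fix U assume U: "U \<in> horn_faces \<tau> (pivot \<tau>)"
  obtain A where A: "\<tau> = cyl_triangle n A" "pivot \<tau> = (A, 1)" "A \<noteq> {0..n}"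
    using assms by (rule cyl_fill_card_3E)
  have "fin_chain (cyl n k) le_cyl U"
    using fin_chain_subset U assms(1) unfolding horn_faces_def cyl_fill_def by blast
  moreover have "cyl_top n \<notin> U \<or> (A, 0) \<notin> U" using U A unfolding horn_faces_def cyl_triangle_def by auto
  ultimately show "U \<in> cyl_base n k" using U A unfolding cyl_base_def horn_faces_def cyl_triangle_def by auto
qed

lemma cyl_triangle_unique:
  assumes "\<tau> \<in> cyl_fill n k" "card \<tau> = 3" "\<tau>' \<in> cyl_fill n k" "card \<tau>' = 3"
    and U: "U \<subseteq> \<tau>" "U \<subseteq> \<tau>'" "U \<noteq> {}" "U \<notin> cyl_base n k"
  shows "\<tau> = \<tau>'"
proof -
  obtain A where A: "\<tau> = cyl_triangle n A" using assms(1,2) by (rule cyl_fill_card_3E)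
  obtain B where B: "\<tau>' = cyl_triangle n B" using assms(3,4) by (rule cyl_fill_card_3E)
  have "fin_chain (cyl n k) le_cyl U"
    using fin_chain_subset assms(1) U(1,3) unfolding cyl_fill_def by blast
  then have "\<not> (\<forall>x\<in>U. snd x = 1)" using U(4) unfolding cyl_base_def by blast
  then obtain x where x: "x \<in> U" "snd x \<noteq> 1" by blast
  have "x = (C, 0)" if "U \<subseteq> cyl_triangle n C" for C
    using x that unfolding cyl_triangle_def by auto
  then have "A = B" using U(1,2) A B by (metis prod.inject)
  then show ?thesis using A B by simp
qed

section \<open>Lifting against \<open>LJ\<^sup>n\<^sub>k \<subseteq> L\<^sup>n\<^sub>k\<close> and \<open>RJ\<^sup>n\<^sub>k \<subseteq> R\<^sup>n\<^sub>k\<close>\<close>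

definition le_sub :: "bool \<Rightarrow> nat set \<Rightarrow> nat set \<Rightarrow> bool" where
  "le_sub dual A B = (if dual then B \<subseteq> A else A \<subseteq> B)"

definition LR :: "bool \<Rightarrow> nat \<Rightarrow> nat \<Rightarrow> (nat \<Rightarrow> nat set) sset" where
  "LR dual n k = nerve (subsets_with n k) (le_sub dual)"

definition LRJ :: "bool \<Rightarrow> nat \<Rightarrow> nat \<Rightarrow> (nat \<Rightarrow> nat set) sset" where
  "LRJ dual n k = subsset (LR dual n k) (\<lambda>m. {\<sigma> \<in> ssimp (LR dual n k) m. \<forall>i\<le>m. \<sigma> i \<noteq> {0..n}})"

definition LR_marked :: "bool \<Rightarrow> nat \<Rightarrow> nat \<Rightarrow> (nat \<Rightarrow> nat set) set" where
  "LR_marked dual n k = {\<sigma> \<in> ssimp (LR dual n k) 1.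
     if dual then Min (\<sigma> 0) = Min (\<sigma> 1) else Max (\<sigma> 0) = Max (\<sigma> 1)}"

lemma LR_False: "LR False n k = L n k" "LRJ False n k = LJ n k" "LR_marked False n k = L_marked n k"
  unfolding LR_def L_def LRJ_def LJ_def LR_marked_def L_marked_def le_sub_def by simp_all

lemma LR_True: "LR True n k = R n k" "LRJ True n k = RJ n k" "LR_marked True n k = R_marked n k"
  unfolding LR_def R_def LRJ_def RJ_def LR_marked_def R_marked_def le_sub_def by simp_all

lemma LR_simplex_iff:
  "\<sigma> \<in> ssimp (LR dual n k) m \<longleftrightarrow> (\<forall>i\<le>m. \<sigma> i \<in> subsets_with n k) \<and>
     (\<forall>i j. i \<le> j \<longrightarrow> j \<le> m \<longrightarrow> le_sub dual (\<sigma> i) (\<sigma> j)) \<and> (\<forall>i>m. \<sigma> i = undefined)"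
  unfolding LR_def nerve_simplex_iff ..

lemma LR_smap: "smap (LR dual n k) m n' \<theta> \<sigma> = (\<lambda>i. if i \<le> m then \<sigma> (\<theta> i) else undefined)"
  unfolding LR_def nerve_smap ..

lemma LRJ_simplex_iff: "\<sigma> \<in> ssimp (LRJ dual n k) m \<longleftrightarrow> \<sigma> \<in> ssimp (LR dual n k) m \<and> (\<forall>i\<le>m. \<sigma> i \<noteq> {0..n})"
  unfolding LRJ_def subsset_def by simp

lemma LRJ_smap: "smap (LRJ dual n k) = smap (LR dual n k)"
  unfolding LRJ_def subsset_def by simp

definition set_part :: "nat \<Rightarrow> (nat \<Rightarrow> nat set \<times> nat) \<Rightarrow> nat \<Rightarrow> nat set" where
  "set_part m s = (\<lambda>i. if i \<le> m then fst (s i) else undefined)"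

text \<open>Level 1 of the cylinder is the \<open>F\<close> end of the homotopy and level 0 its identity end; for
  \<open>R\<^sup>n\<^sub>k\<close> the homotopy runs from \<open>F\<close> to the identity, hence the flip.\<close>

definition level_part :: "bool \<Rightarrow> nat \<Rightarrow> (nat \<Rightarrow> nat set \<times> nat) \<Rightarrow> nat \<Rightarrow> nat" where
  "level_part dual m s = (\<lambda>i. if i \<le> m then (if dual then 1 - snd (s i) else snd (s i)) else undefined)"

lemma set_part_LR:
  assumes s: "s \<in> ssimp (nerve (cyl n k) (le_cyl_dual dual)) m"
  shows "set_part m s \<in> ssimp (LR dual n k) m"
  using s unfolding LR_simplex_iff set_part_def nerve_simplex_iff cyl_def le_cyl_dual_def le_cyl_def le_sub_def
  by (cases dual) auto

lemma set_part_LRJ: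
  assumes s: "s \<in> ssimp (nerve (cyl n k) (le_cyl_dual dual)) m" and no_top: "cyl_top n \<notin> s ` {0..m}"
  shows "set_part m s \<in> ssimp (LRJ dual n k) m"
  unfolding LRJ_simplex_iff
proof (intro conjI allI impI)
  show "set_part m s \<in> ssimp (LR dual n k) m" by (rule set_part_LR[OF s])
  fix i assume i: "i \<le> m"
  then have "s i \<in> s ` {0..m}" by auto
  then have "s i \<noteq> cyl_top n" using no_top by metis
  moreover have "s i \<in> cyl n k" using s i unfolding nerve_simplex_iff by auto
  ultimately show "set_part m s i \<noteq> {0..n}" using i cyl_level[of "s i" n k] unfolding set_part_def cyl_iff by force
qed

lemma level_part_Delta:
  assumes s: "s \<in> ssimp (nerve (cyl n k) (le_cyl_dual dual)) m"
  shows "level_part dual m s \<in> ssimp (Delta 1) m"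
  unfolding Delta_simplex_iff
proof (intro conjI allI impI)
  fix i assume "i \<le> m"
  then show "level_part dual m s i \<le> 1" using s unfolding level_part_def nerve_simplex_iff cyl_iff by auto
next
  fix i j assume ij: "i \<le> j" "j \<le> m"
  then have "le_cyl_dual dual (s i) (s j)" using s unfolding nerve_simplex_iff by auto
  then show "level_part dual m s i \<le> level_part dual m s j"
    using ij unfolding level_part_def le_cyl_dual_def le_cyl_def by (cases dual) auto
qed (auto simp: level_part_def)

lemma set_part_smap:
  assumes "mono_map m n' \<theta>"
  shows "set_part m (smap (nerve (cyl n k) (le_cyl_dual dual)) m n' \<theta> s) = smap (LR dual n k) m n' \<theta> (set_part n' s)"
  using mono_map_le[OF assms] unfolding set_part_def nerve_smap LR_smap by (intro ext) simp

lemma level_part_smap: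
  assumes "mono_map m n' \<theta>"
  shows "level_part dual m (smap (nerve Q le) m n' \<theta> s) = smap (Delta 1) m n' \<theta> (level_part dual n' s)"
  using mono_map_le[OF assms] unfolding level_part_def nerve_smap Delta_smap by (intro ext) simp

lemma level_part_const:
  "(\<And>i. i \<le> m \<Longrightarrow> snd (s i) = e) \<Longrightarrow> e \<le> 1 \<Longrightarrow>
    level_part dual m s = const_simplex m (if dual then 1 - e else e)"
  unfolding level_part_def const_simplex_def by (auto intro!: ext)

text \<open>A base simplex through the top vertex lies at level 1; on its faces avoiding the top vertex
  the second clause gives \<open>F \<circ> f\<close>, which is \<open>g'\<close> there. This is what makes \<open>base_map\<close> simplicial.\<close>

definition base_map ::
  "nat \<Rightarrow> bool \<Rightarrow> (nat \<Rightarrow> (nat \<Rightarrow> nat set) \<Rightarrow> 'a) \<Rightarrow> (nat \<Rightarrow> (nat \<Rightarrow> nat set) \<Rightarrow> 'a)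
     \<Rightarrow> (nat \<Rightarrow> 'a \<times> (nat \<Rightarrow> nat) \<Rightarrow> 'a) \<Rightarrow> nat \<Rightarrow> (nat \<Rightarrow> nat set \<times> nat) \<Rightarrow> 'a" where
  "base_map n dual g' f \<alpha> m s =
     (if cyl_top n \<in> s ` {0..m} then g' m (set_part m s) else \<alpha> m (f m (set_part m s), level_part dual m s))"

lemma base_map_level_1:
  assumes \<alpha>_F: "\<And>m x. x \<in> ssimp C m \<Longrightarrow> \<alpha> m (x, const_simplex m (if dual then 0 else 1)) = F m x"
    and f: "ssmap (LRJ dual n k) C f"
    and g'_f: "\<And>m x. x \<in> ssimp (LRJ dual n k) m \<Longrightarrow> g' m x = F m (f m x)"
    and s: "s \<in> ssimp (nerve (cyl n k) (le_cyl_dual dual)) m" and level: "\<And>i. i \<le> m \<Longrightarrow> snd (s i) = 1"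
  shows "base_map n dual g' f \<alpha> m s = g' m (set_part m s)"
proof (cases "cyl_top n \<in> s ` {0..m}")
  case False
  have J: "set_part m s \<in> ssimp (LRJ dual n k) m" by (rule set_part_LRJ[OF s False])
  have "base_map n dual g' f \<alpha> m s = \<alpha> m (f m (set_part m s), const_simplex m (if dual then 0 else 1))"
    unfolding base_map_def using False level_part_const[OF level] by simp
  also have "\<dots> = g' m (set_part m s)" using \<alpha>_F[OF ssmap_simplex[OF f J]] g'_f[OF J] by simp
  finally show ?thesis .
qed (simp add: base_map_def)

lemma ssmap_base_map:
  assumes \<alpha>: "ssmap (sprod C (Delta 1)) C \<alpha>"
    and \<alpha>_F: "\<And>m x. x \<in> ssimp C m \<Longrightarrow> \<alpha> m (x, const_simplex m (if dual then 0 else 1)) = F m x"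
    and f: "ssmap (LRJ dual n k) C f" and g': "ssmap (LR dual n k) C g'"
    and g'_f: "\<And>m x. x \<in> ssimp (LRJ dual n k) m \<Longrightarrow> g' m x = F m (f m x)"
  shows "ssmap (subnerve (cyl n k) (le_cyl_dual dual) (cyl_base n k)) C (base_map n dual g' f \<alpha>)"
  unfolding ssmap_def
proof (intro conjI allI impI)
  fix m s assume "s \<in> ssimp (subnerve (cyl n k) (le_cyl_dual dual) (cyl_base n k)) m"
  then have s: "s \<in> ssimp (nerve (cyl n k) (le_cyl_dual dual)) m" by (simp add: subnerve_simplex_iff)
  show "base_map n dual g' f \<alpha> m s \<in> ssimp C m"
  proof (cases "cyl_top n \<in> s ` {0..m}")
    case True
    then show ?thesis unfolding base_map_def using ssmap_simplex[OF g' set_part_LR[OF s]] by simp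
  next
    case False
    have "(f m (set_part m s), level_part dual m s) \<in> ssimp (sprod C (Delta 1)) m"
      using ssmap_simplex[OF f set_part_LRJ[OF s False]] level_part_Delta[OF s] by (simp add: sprod_simplex_iff)
    then show ?thesis unfolding base_map_def using ssmap_simplex[OF \<alpha>] False by simp
  qed
next
  fix m n' \<theta> s assume \<theta>: "mono_map m n' \<theta>"
    and "s \<in> ssimp (subnerve (cyl n k) (le_cyl_dual dual) (cyl_base n k)) n'"
  then have s: "s \<in> ssimp (nerve (cyl n k) (le_cyl_dual dual)) n'" and base: "s ` {0..n'} \<in> cyl_base n k"
    by (simp_all add: subnerve_simplex_iff)
  let ?s = "smap (nerve (cyl n k) (le_cyl_dual dual)) m n' \<theta> s"
  have s': "?s \<in> ssimp (nerve (cyl n k) (le_cyl_dual dual)) m" by (rule nerve_smap_simplex[OF s \<theta>])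
  have "base_map n dual g' f \<alpha> m ?s = smap C m n' \<theta> (base_map n dual g' f \<alpha> n' s)"
  proof (cases "cyl_top n \<in> s ` {0..n'}")
    case False
    then have False': "cyl_top n \<notin> ?s ` {0..m}" using nerve_smap_image[OF \<theta>, of "cyl n k" "le_cyl_dual dual" s] by blast
    have J: "set_part n' s \<in> ssimp (LRJ dual n k) n'" by (rule set_part_LRJ[OF s False])
    have "base_map n dual g' f \<alpha> m ?s = \<alpha> m (f m (set_part m ?s), level_part dual m ?s)"
      unfolding base_map_def using False' by simp
    also have "\<dots> = \<alpha> m (smap (sprod C (Delta 1)) m n' \<theta> (f n' (set_part n' s), level_part dual n' s))"
      using ssmap_smap[OF f \<theta> J] by (simp add: set_part_smap[OF \<theta>] level_part_smap[OF \<theta>] LRJ_smap sprod_smap)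
    also have "\<dots> = smap C m n' \<theta> (\<alpha> n' (f n' (set_part n' s), level_part dual n' s))"
      using ssmap_smap[OF \<alpha> \<theta>] ssmap_simplex[OF f J] level_part_Delta[OF s] by (simp add: sprod_simplex_iff)
    also have "\<dots> = smap C m n' \<theta> (base_map n dual g' f \<alpha> n' s)" unfolding base_map_def using False by simp
    finally show ?thesis .
  next
    case True
    then have level: "snd (s i) = 1" if "i \<le> n'" for i using base that unfolding cyl_base_def by auto
    have "base_map n dual g' f \<alpha> m ?s = g' m (set_part m ?s)"
    proof (rule base_map_level_1[where F=F, OF \<alpha>_F f g'_f s'])
      fix i assume "i \<le> m"
      then show "snd (?s i) = 1" using level[OF mono_map_le[OF \<theta>]] by (simp add: nerve_smap)
    qed
    also have "\<dots> = smap C m n' \<theta> (g' n' (set_part n' s))"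
      using ssmap_smap[OF g' \<theta> set_part_LR[OF s]] by (simp add: set_part_smap[OF \<theta>])
    also have "\<dots> = smap C m n' \<theta> (base_map n dual g' f \<alpha> n' s)" unfolding base_map_def using True by simp
    finally show ?thesis .
  qed
  then show "base_map n dual g' f \<alpha> m (smap (subnerve (cyl n k) (le_cyl_dual dual) (cyl_base n k)) m n' \<theta> s) =
      smap C m n' \<theta> (base_map n dual g' f \<alpha> n' s)"
    by (simp add: subnerve_smap)
qed

text \<open>The sets A for which \<open>A \<subseteq> [n]\<close> is a marked edge of \<open>L\<^sup>n\<^sub>k\<close> (resp. \<open>R\<^sup>n\<^sub>k\<close>).\<close>

definition marked_to_top :: "bool \<Rightarrow> nat \<Rightarrow> nat \<Rightarrow> nat set set" where
  "marked_to_top dual n k = {A. (A, 0) \<in> cyl n k \<and> (if dual then 0 \<in> A else n \<in> A)}"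

lemma LR_marked_edge:
  assumes "\<sigma> \<in> ssimp (LR dual n k) 1" and "\<sigma> 0 \<in> {A, {0..n}}" "\<sigma> 1 \<in> {A, {0..n}}"
    and "A \<in> marked_to_top dual n k"
  shows "\<sigma> \<in> LR_marked dual n k"
proof -
  have A: "finite A" "A \<subseteq> {0..n}" "if dual then 0 \<in> A else n \<in> A"
    using assms(4) unfolding marked_to_top_def cyl_iff by (auto intro: finite_subset)
  have "Max A = n" if "\<not> dual" using A that by (intro Max_eqI) auto
  moreover have "Min A = 0" if dual using A that by (intro Min_eqI) auto
  moreover have "Max {0..n} = n" "Min {0..n} = (0::nat)" by (auto intro: Max_eqI Min_eqI)
  ultimately show ?thesis using assms(1-3) unfolding LR_marked_def by auto
qed

lemma base_map_triangle_edge: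
  assumes \<alpha>: "ssmap (sprod C (Delta 1)) C \<alpha>" and \<alpha>_W: "\<alpha> 1 ` (W \<times> ssimp (Delta 1) 1) \<subseteq> W"
    and f: "ssmap (LRJ dual n k) C f" and f_W: "f 1 ` (LR_marked dual n k \<inter> ssimp (LRJ dual n k) 1) \<subseteq> W"
    and g'_W: "g' 1 ` LR_marked dual n k \<subseteq> W0" and W0: "W0 \<subseteq> W"
    and A: "A \<in> marked_to_top dual n k"
    and s: "s \<in> ssimp (subnerve (cyl n k) (le_cyl_dual dual) (cyl_base n k)) 1"
    and img: "s ` {0..1} \<subseteq> cyl_triangle n A"
  shows "base_map n dual g' f \<alpha> 1 s \<in> W"
proof -
  have s_nerve: "s \<in> ssimp (nerve (cyl n k) (le_cyl_dual dual)) 1" using s by (simp add: subnerve_simplex_iff)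
  have "s 0 \<in> cyl_triangle n A" "s 1 \<in> cyl_triangle n A" using img by auto
  then have set_part01: "set_part 1 s 0 \<in> {A, {0..n}}" "set_part 1 s 1 \<in> {A, {0..n}}"
    unfolding set_part_def cyl_triangle_def by auto
  show ?thesis
  proof (cases "cyl_top n \<in> s ` {0..1}")
    case False
    have J: "set_part 1 s \<in> ssimp (LRJ dual n k) 1" by (rule set_part_LRJ[OF s_nerve False])
    then have "set_part 1 s \<in> LR_marked dual n k"
      using LR_marked_edge[OF _ set_part01 A] by (simp add: LRJ_simplex_iff)
    then have "f 1 (set_part 1 s) \<in> W" using f_W J by blast
    then show ?thesis
      unfolding base_map_def using False \<alpha>_W level_part_Delta[OF s_nerve] by auto
  next
    case True
    have "set_part 1 s \<in> LR_marked dual n k" by (rule LR_marked_edge[OF set_part_LR[OF s_nerve] set_part01 A])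
    then show ?thesis unfolding base_map_def using True g'_W W0 by auto
  qed
qed

definition cyl_triangles :: "nat \<Rightarrow> nat \<Rightarrow> (nat set \<times> nat) set set" where
  "cyl_triangles n k = {\<tau> \<in> cyl_fill n k. card \<tau> = 3}"

lemma cyl_triangles_horn:
  assumes "\<tau> \<in> cyl_triangles n k"
  shows "card \<tau> - 1 = 2" and "chain_rank (le_cyl_dual dual) \<tau> (pivot \<tau>) = 1"
  using assms pivot_rank_inner[of \<tau> n k dual] unfolding cyl_triangles_def by auto

lemma cyl_fill_fin_chain: "\<tau> \<in> cyl_fill n k \<Longrightarrow> fin_chain (cyl n k) (le_cyl_dual dual) \<tau>"
  unfolding cyl_fill_def fin_chain_le_cyl_dual_iff by blast

lemma weakly_closedD:
  assumes "weakly_closed C W" and "ssmap (horn 2 1) C h" and "h 1 ` ssimp (horn 2 1) 1 \<subseteq> W"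
  shows "\<exists>H. ssmap (Delta 2) C H \<and> H 1 ` ssimp (Delta 2) 1 \<subseteq> W \<and>
      (\<forall>m \<rho>. \<rho> \<in> ssimp (horn 2 1) m \<longrightarrow> H m \<rho> = h m \<rho>)"
  using assms unfolding weakly_closed_def by blast

lemma cyl_triangle_filler:
  fixes C :: "'a sset"
  assumes qc: "quasicategory C" and wc: "weakly_closed C W"
    and g0: "ssmap (subnerve (cyl n k) (le_cyl_dual dual) (cyl_base n k)) C g0"
    and \<tau>: "\<tau> \<in> cyl_triangles n k"
    and edges: "\<And>s. s \<in> ssimp (subnerve (cyl n k) (le_cyl_dual dual) (cyl_base n k)) 1 \<Longrightarrow>
        \<exists>A\<in>M. s ` {0..1} \<subseteq> cyl_triangle n A \<Longrightarrow> g0 1 s \<in> W"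
  shows "\<exists>H. ssmap (Delta 2) C H \<and>
      (\<forall>m \<rho>. \<rho> \<in> ssimp (horn 2 1) m \<longrightarrow> H m \<rho> = g0 m (chain_simplex (le_cyl_dual dual) \<tau> m \<rho>)) \<and>
      ((\<exists>A\<in>M. \<tau> = cyl_triangle n A) \<longrightarrow> H 1 ` ssimp (Delta 2) 1 \<subseteq> W)"
proof -
  let ?le = "le_cyl_dual dual"
  have fill: "\<tau> \<in> cyl_fill n k" and card: "card \<tau> = 3" using \<tau> unfolding cyl_triangles_def by auto
  note ch = cyl_fill_fin_chain[OF fill] and v = pivot_in[OF fill]
  note faces = horn_faces_cyl_triangle[OF fill card]
  have horn: "horn (card \<tau> - 1) (chain_rank ?le \<tau> (pivot \<tau>)) = horn 2 1"
    using cyl_triangles_horn[OF \<tau>] by simp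
  have h: "ssmap (horn 2 1) C (\<lambda>m \<rho>. g0 m (chain_simplex ?le \<tau> m \<rho>))"
    using ssmap_horn_chain_simplex[OF po_le_cyl_dual g0 ch v faces] unfolding horn .
  show ?thesis
  proof (cases "\<exists>A\<in>M. \<tau> = cyl_triangle n A")
    case True
    then obtain A where A: "A \<in> M" "\<tau> = cyl_triangle n A" by blast
    have "g0 1 (chain_simplex ?le \<tau> 1 \<rho>) \<in> W" if \<rho>: "\<rho> \<in> ssimp (horn 2 1) 1" for \<rho>
    proof -
      have \<rho>': "\<rho> \<in> ssimp (horn (card \<tau> - 1) (chain_rank ?le \<tau> (pivot \<tau>))) 1" using \<rho> horn by simp
      then have "chain_simplex ?le \<tau> 1 \<rho> ` {0..1} \<subseteq> \<tau>"
        using chain_simplex_nerve(3)[OF po_le_cyl_dual ch] by (simp add: horn_simplex_iff)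
      then show ?thesis using edges[OF chain_simplex_subnerve[OF po_le_cyl_dual ch v faces \<rho>']] A by auto
    qed
    then show ?thesis using weakly_closedD[OF wc h] True by blast
  next
    case False
    then show ?thesis using quasicategory_fill_inner_horn[OF qc h] by auto
  qed
qed

lemma extend_base_over_triangles:
  fixes C :: "'a sset"
  assumes kn: "k \<le> n" and qc: "quasicategory C" and wc: "weakly_closed C W"
    and g0: "ssmap (subnerve (cyl n k) (le_cyl_dual dual) (cyl_base n k)) C g0"
    and M: "M \<subseteq> {A. (A, 0) \<in> cyl n k}"
    and edges: "\<And>s. s \<in> ssimp (subnerve (cyl n k) (le_cyl_dual dual) (cyl_base n k)) 1 \<Longrightarrow>
        \<exists>A\<in>M. s ` {0..1} \<subseteq> cyl_triangle n A \<Longrightarrow> g0 1 s \<in> W"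
  obtains g1
  where "ssmap (subnerve (cyl n k) (le_cyl_dual dual) (cyl_base n k \<union> faces_of (cyl_triangles n k))) C g1"
    and "\<And>m \<sigma>. \<sigma> \<in> ssimp (subnerve (cyl n k) (le_cyl_dual dual) (cyl_base n k)) m \<Longrightarrow> g1 m \<sigma> = g0 m \<sigma>"
    and "\<And>A s. A \<in> M \<Longrightarrow>
        s \<in> ssimp (subnerve (cyl n k) (le_cyl_dual dual) (cyl_base n k \<union> faces_of (cyl_triangles n k))) 1 \<Longrightarrow>
        s ` {0..1} = {(A, 0), cyl_top n} \<Longrightarrow> g1 1 s \<in> W"
proof -
  let ?le = "le_cyl_dual dual" and ?T = "cyl_triangles n k"
  define H where "H \<tau> = (SOME H. ssmap (Delta 2) C H \<and>
      (\<forall>m \<rho>. \<rho> \<in> ssimp (horn 2 1) m \<longrightarrow> H m \<rho> = g0 m (chain_simplex ?le \<tau> m \<rho>)) \<and>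
      ((\<exists>A\<in>M. \<tau> = cyl_triangle n A) \<longrightarrow> H 1 ` ssimp (Delta 2) 1 \<subseteq> W))" for \<tau>
  have H: "ssmap (Delta 2) C (H \<tau>) \<and>
      (\<forall>m \<rho>. \<rho> \<in> ssimp (horn 2 1) m \<longrightarrow> H \<tau> m \<rho> = g0 m (chain_simplex ?le \<tau> m \<rho>)) \<and>
      ((\<exists>A\<in>M. \<tau> = cyl_triangle n A) \<longrightarrow> H \<tau> 1 ` ssimp (Delta 2) 1 \<subseteq> W)" if "\<tau> \<in> ?T" for \<tau>
    unfolding H_def by (rule someI_ex[OF cyl_triangle_filler[OF qc wc g0 that edges]])
  have fill: "\<tau> \<in> cyl_fill n k" "card \<tau> = 3" if "\<tau> \<in> ?T" for \<tau> using that unfolding cyl_triangles_def by auto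
  have unique: "\<tau> = \<tau>'" if "\<tau> \<in> ?T" "\<tau>' \<in> ?T" "U \<subseteq> \<tau>" "U \<subseteq> \<tau>'" "U \<noteq> {}" "U \<notin> cyl_base n k"
    for \<tau> \<tau>' U using cyl_triangle_unique[OF fill[OF that(1)] fill[OF that(2)] that(3-6)] .
  let ?g1 = "extend_over (cyl_base n k) ?le g0 ?T H"
  have "ssmap (subnerve (cyl n k) ?le (cyl_base n k \<union> faces_of ?T)) C ?g1"
  proof (rule ssmap_extend_over[OF po_le_cyl_dual g0 down_closed_cyl_base, where v = pivot])
    fix \<tau> assume \<tau>: "\<tau> \<in> ?T"
    note dims = cyl_triangles_horn[OF \<tau>]
    show "fin_chain (cyl n k) ?le \<tau>" "pivot \<tau> \<in> \<tau>" using cyl_fill_fin_chain pivot_in fill[OF \<tau>] by auto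
    show "\<tau> \<notin> cyl_base n k" "\<tau> - {pivot \<tau>} \<notin> cyl_base n k"
      using cyl_fill_not_base cyl_fill_pivot_face_not_base fill[OF \<tau>] by auto
    show "horn_faces \<tau> (pivot \<tau>) \<subseteq> cyl_base n k" using horn_faces_cyl_triangle fill[OF \<tau>] by auto
    show "ssmap (Delta (card \<tau> - 1)) C (H \<tau>)" using H[OF \<tau>] dims by simp
    fix m \<rho> assume "\<rho> \<in> ssimp (horn (card \<tau> - 1) (chain_rank ?le \<tau> (pivot \<tau>))) m"
    then show "H \<tau> m \<rho> = g0 m (chain_simplex ?le \<tau> m \<rho>)" using H[OF \<tau>] dims by simp
  qed (use unique in blast)
  moreover have "?g1 m \<sigma> = g0 m \<sigma>" if "\<sigma> \<in> ssimp (subnerve (cyl n k) ?le (cyl_base n k)) m" for m \<sigma>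
    using that by (intro extend_over_old) (simp add: subnerve_simplex_iff)
  moreover have "?g1 1 s \<in> W"
    if A: "A \<in> M" and s: "s \<in> ssimp (subnerve (cyl n k) ?le (cyl_base n k \<union> faces_of ?T)) 1"
      and img: "s ` {0..1} = {(A, 0), cyl_top n}" for A s
  proof -
    have \<tau>: "cyl_triangle n A \<in> ?T"
      using cyl_triangle_in_cyl_fill[OF kn] A M unfolding cyl_triangles_def by auto
    have sub: "s ` {0..1} \<subseteq> cyl_triangle n A" using img unfolding cyl_triangle_def by auto
    have "s ` {0..1} \<notin> cyl_base n k" using img unfolding cyl_base_def by auto
    then have "?g1 1 s = H (cyl_triangle n A) 1 (rank_simplex ?le (cyl_triangle n A) 1 s)"
      using unique \<tau> sub by (intro extend_over_new) blast+
    moreover have "rank_simplex ?le (cyl_triangle n A) 1 s \<in> ssimp (Delta 2) 1"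
      using rank_simplex_Delta[OF po_le_cyl_dual cyl_fill_fin_chain[OF fill(1)[OF \<tau>]] _ sub] s
        cyl_triangles_horn(1)[OF \<tau>] by (simp add: subnerve_simplex_iff)
    ultimately show ?thesis using H[OF \<tau>] A by auto
  qed
  ultimately show ?thesis using that by blast
qed

definition cyl_chains :: "nat \<Rightarrow> nat \<Rightarrow> (nat set \<times> nat) set set" where
  "cyl_chains n k = {U. fin_chain (cyl n k) le_cyl U}"

lemma faces_of_Un: "faces_of (A \<union> B) = faces_of A \<union> faces_of B"
  unfolding faces_of_def by blast

lemma cyl_chains_eq: "cyl_base n k \<union> faces_of (cyl_fill n k) = cyl_chains n k"
proof (intro equalityI subsetI)
  fix U assume "U \<in> cyl_base n k \<union> faces_of (cyl_fill n k)"
  then show "U \<in> cyl_chains n k"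
    unfolding cyl_base_def faces_of_def cyl_fill_def cyl_chains_def using fin_chain_subset by blast
next
  fix U assume U: "U \<in> cyl_chains n k"
  then have ch: "fin_chain (cyl n k) le_cyl U" unfolding cyl_chains_def by simp
  show "U \<in> cyl_base n k \<union> faces_of (cyl_fill n k)"
  proof (cases "U \<in> cyl_base n k")
    case False
    then obtain A where "insert (A, 1) U \<in> cyl_fill n k" using cyl_fill_cover[OF ch] by blast
    then show ?thesis using fin_chainD(3)[OF ch] unfolding faces_of_def by blast
  qed simp
qed

lemma cyl_fill_not_triangle_face:
  assumes \<tau>: "\<tau> \<in> cyl_fill n k" "card \<tau> \<noteq> 3"
  shows "\<tau> \<notin> faces_of (cyl_triangles n k)" and "\<tau> - {pivot \<tau>} \<notin> faces_of (cyl_triangles n k)"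
proof -
  have fin: "finite \<tau>" using fin_chainD(2)[OF cyl_fill_fin_chain[OF \<tau>(1), of False]] .
  have card: "4 \<le> card \<tau>" using card_cyl_fill[OF \<tau>(1)] \<tau>(2) by simp
  have triangle: "finite \<tau>'" "card \<tau>' = 3" "\<tau>' \<in> cyl_fill n k" if "\<tau>' \<in> cyl_triangles n k" for \<tau>'
    using that fin_chainD(2)[OF cyl_fill_fin_chain[of \<tau>' n k False]] unfolding cyl_triangles_def by auto
  show "\<tau> \<notin> faces_of (cyl_triangles n k)"
  proof
    assume "\<tau> \<in> faces_of (cyl_triangles n k)"
    then obtain \<tau>' where "\<tau>' \<in> cyl_triangles n k" "\<tau> \<subseteq> \<tau>'" unfolding faces_of_def by blast
    then show False using card_mono[OF triangle(1), of \<tau>' \<tau>] triangle(2) card by simp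
  qed
  show "\<tau> - {pivot \<tau>} \<notin> faces_of (cyl_triangles n k)"
  proof
    assume "\<tau> - {pivot \<tau>} \<in> faces_of (cyl_triangles n k)"
    then obtain \<tau>' where \<tau>': "\<tau>' \<in> cyl_triangles n k" "\<tau> - {pivot \<tau>} \<subseteq> \<tau>'" unfolding faces_of_def by blast
    have "card (\<tau> - {pivot \<tau>}) = card \<tau> - 1" using fin pivot_in[OF \<tau>(1)] by simp
    then have "\<tau> - {pivot \<tau>} = \<tau>'"
      using card_mono[OF triangle(1)[OF \<tau>'(1)] \<tau>'(2)] triangle(2)[OF \<tau>'(1)] card
      by (intro card_subset_eq[OF triangle(1)[OF \<tau>'(1)] \<tau>'(2)]) auto
    then show False using cyl_fill_pivot_face_not_fill[OF \<tau>(1)] triangle(3)[OF \<tau>'(1)] by simp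
  qed
qed

lemma cyl_fill_face_not_triangle:
  assumes \<tau>: "\<tau> \<in> cyl_fill n k" "card \<tau> \<noteq> 3" and w: "w \<in> \<tau>" "w \<noteq> pivot \<tau>"
  shows "\<tau> - {w} \<in> cyl_base n k \<union> faces_of (cyl_triangles n k) \<or>
    (\<exists>\<tau>'\<in>{\<tau> \<in> cyl_fill n k. card \<tau> \<noteq> 3}. fill_rank \<tau>' < fill_rank \<tau> \<and> \<tau> - {w} \<subseteq> \<tau>')"
proof -
  have "card (\<tau> - {w}) = card \<tau> - 1" using fin_chainD(2)[OF cyl_fill_fin_chain[OF \<tau>(1), of False]] w(1) by simp
  then have "card (\<tau> - {w}) \<noteq> 0" using card_cyl_fill[OF \<tau>(1)] \<tau>(2) by linarith
  then have "\<tau> - {w} \<noteq> {}" by (metis card.empty)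
  from cyl_fill_face[OF \<tau>(1) w] show ?thesis
  proof (elim disjE bexE conjE)
    fix \<tau>' assume \<tau>': "\<tau>' \<in> cyl_fill n k" "fill_rank \<tau>' < fill_rank \<tau>" "\<tau> - {w} \<subseteq> \<tau>'"
    show ?thesis
    proof (cases "card \<tau>' = 3")
      case True
      then have "\<tau> - {w} \<in> faces_of (cyl_triangles n k)"
        using \<tau>' \<open>\<tau> - {w} \<noteq> {}\<close> unfolding faces_of_def cyl_triangles_def by blast
      then show ?thesis by blast
    next
      case False
      then show ?thesis using \<tau>' by blast
    qed
  qed blast
qed

lemma extend_over_cyl_fill:
  fixes C :: "'a sset"
  assumes qc: "quasicategory C"
    and g1: "ssmap (subnerve (cyl n k) (le_cyl_dual dual) (cyl_base n k \<union> faces_of (cyl_triangles n k))) C g1"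
  obtains G where "ssmap (subnerve (cyl n k) (le_cyl_dual dual) (cyl_chains n k)) C G"
    and "\<And>m \<sigma>. \<sigma> \<in> ssimp (subnerve (cyl n k) (le_cyl_dual dual) (cyl_base n k \<union> faces_of (cyl_triangles n k))) m \<Longrightarrow>
        G m \<sigma> = g1 m \<sigma>"
proof -
  let ?D = "cyl_base n k \<union> faces_of (cyl_triangles n k)" and ?T = "{\<tau> \<in> cyl_fill n k. card \<tau> \<noteq> 3}"
  obtain G where G: "ssmap (subnerve (cyl n k) (le_cyl_dual dual) (?D \<union> faces_of ?T)) C G"
    and G_g1: "\<And>m \<sigma>. \<sigma> \<in> ssimp (subnerve (cyl n k) (le_cyl_dual dual) ?D) m \<Longrightarrow> G m \<sigma> = g1 m \<sigma>"
  proof (rule extend_by_ranked_inner_horns[OF po_le_cyl_dual qc g1 down_closed_Un_faces_of[OF down_closed_cyl_base],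
        where v = pivot and r = fill_rank])
    show "finite ?T" using finite_cyl_fill by simp
    fix \<tau> assume "\<tau> \<in> ?T"
    then have \<tau>: "\<tau> \<in> cyl_fill n k" "card \<tau> \<noteq> 3" by auto
    show "fin_chain (cyl n k) (le_cyl_dual dual) \<tau>" by (rule cyl_fill_fin_chain[OF \<tau>(1)])
    show "pivot \<tau> \<in> \<tau>" by (rule pivot_in[OF \<tau>(1)])
    show "0 < chain_rank (le_cyl_dual dual) \<tau> (pivot \<tau>) \<and> chain_rank (le_cyl_dual dual) \<tau> (pivot \<tau>) < card \<tau> - 1"
      by (rule pivot_rank_inner[OF \<tau>(1)])
    show "\<tau> \<notin> ?D" "\<tau> - {pivot \<tau>} \<notin> ?D"
      using cyl_fill_not_base[OF \<tau>(1)] cyl_fill_pivot_face_not_base[OF \<tau>(1)] cyl_fill_not_triangle_face[OF \<tau>]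
      by auto
    show "\<tau> - {w} \<in> ?D \<or> (\<exists>\<tau>'\<in>?T. fill_rank \<tau>' < fill_rank \<tau> \<and> \<tau> - {w} \<subseteq> \<tau>')"
      if "w \<in> \<tau>" "w \<noteq> pivot \<tau>" for w
      by (rule cyl_fill_face_not_triangle[OF \<tau> that])
  next
    fix \<tau> \<tau>' assume "\<tau> \<in> ?T" "\<tau>' \<in> ?T"
    then have fill: "\<tau> \<in> cyl_fill n k" "\<tau>' \<in> cyl_fill n k" by auto
    show "\<tau> - {pivot \<tau>} \<subseteq> \<tau>' \<Longrightarrow> \<tau>' \<noteq> \<tau> \<Longrightarrow> fill_rank \<tau> < fill_rank \<tau>'"
      by (rule fill_rank_pivot_face[OF fill])
    show "\<tau> \<subseteq> \<tau>' \<Longrightarrow> \<tau> \<noteq> \<tau>' \<Longrightarrow> fill_rank \<tau> < fill_rank \<tau>'"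
      by (rule fill_rank_psubset[OF fill])
  qed (rule that)
  have "cyl_fill n k = cyl_triangles n k \<union> ?T" unfolding cyl_triangles_def by auto
  then have "faces_of (cyl_fill n k) = faces_of (cyl_triangles n k) \<union> faces_of ?T" by (metis faces_of_Un)
  then have "?D \<union> faces_of ?T = cyl_chains n k" unfolding cyl_chains_eq[symmetric] by auto
  then show ?thesis using that[of G] G G_g1 by simp
qed

lemma cyl_extension:
  fixes C :: "'a sset"
  assumes kn: "k \<le> n" and qc: "quasicategory C" and wc: "weakly_closed C W"
    and g0: "ssmap (subnerve (cyl n k) (le_cyl_dual dual) (cyl_base n k)) C g0"
    and M: "M \<subseteq> {A. (A, 0) \<in> cyl n k}"
    and edges: "\<And>s. s \<in> ssimp (subnerve (cyl n k) (le_cyl_dual dual) (cyl_base n k)) 1 \<Longrightarrow>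
        \<exists>A\<in>M. s ` {0..1} \<subseteq> cyl_triangle n A \<Longrightarrow> g0 1 s \<in> W"
  obtains G where "ssmap (subnerve (cyl n k) (le_cyl_dual dual) (cyl_chains n k)) C G"
    and "\<And>m \<sigma>. \<sigma> \<in> ssimp (subnerve (cyl n k) (le_cyl_dual dual) (cyl_base n k)) m \<Longrightarrow> G m \<sigma> = g0 m \<sigma>"
    and "\<And>A s. A \<in> M \<Longrightarrow> s \<in> ssimp (subnerve (cyl n k) (le_cyl_dual dual) (cyl_chains n k)) 1 \<Longrightarrow>
        s ` {0..1} = {(A, 0), cyl_top n} \<Longrightarrow> G 1 s \<in> W"
proof -
  let ?D = "cyl_base n k \<union> faces_of (cyl_triangles n k)"
  obtain g1 where g1: "ssmap (subnerve (cyl n k) (le_cyl_dual dual) ?D) C g1"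
    and g1_g0: "\<And>m \<sigma>. \<sigma> \<in> ssimp (subnerve (cyl n k) (le_cyl_dual dual) (cyl_base n k)) m \<Longrightarrow> g1 m \<sigma> = g0 m \<sigma>"
    and g1_W: "\<And>A s. A \<in> M \<Longrightarrow> s \<in> ssimp (subnerve (cyl n k) (le_cyl_dual dual) ?D) 1 \<Longrightarrow>
        s ` {0..1} = {(A, 0), cyl_top n} \<Longrightarrow> g1 1 s \<in> W"
    by (rule extend_base_over_triangles[OF kn qc wc g0 M edges]) (assumption | rule that)+
  obtain G where G: "ssmap (subnerve (cyl n k) (le_cyl_dual dual) (cyl_chains n k)) C G"
    and G_g1: "\<And>m \<sigma>. \<sigma> \<in> ssimp (subnerve (cyl n k) (le_cyl_dual dual) ?D) m \<Longrightarrow> G m \<sigma> = g1 m \<sigma>"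
    by (rule extend_over_cyl_fill[OF qc g1]) (rule that)
  have "G m \<sigma> = g0 m \<sigma>" if "\<sigma> \<in> ssimp (subnerve (cyl n k) (le_cyl_dual dual) (cyl_base n k)) m" for m \<sigma>
    using G_g1[OF subnerve_mono[OF _ that]] g1_g0[OF that] by simp
  moreover have "G 1 s \<in> W"
    if A: "A \<in> M" and s: "s \<in> ssimp (subnerve (cyl n k) (le_cyl_dual dual) (cyl_chains n k)) 1"
      and img: "s ` {0..1} = {(A, 0), cyl_top n}" for A s
  proof -
    have "cyl_triangle n A \<in> cyl_triangles n k"
      using cyl_triangle_in_cyl_fill[OF kn] A M unfolding cyl_triangles_def by auto
    moreover have "s ` {0..1} \<subseteq> cyl_triangle n A" using img unfolding cyl_triangle_def by auto
    ultimately have "s ` {0..1} \<in> ?D" using img unfolding faces_of_def by blast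
    then have "s \<in> ssimp (subnerve (cyl n k) (le_cyl_dual dual) ?D) 1"
      using s by (simp add: subnerve_simplex_iff)
    then show ?thesis using G_g1 g1_W[OF A _ img] by simp
  qed
  ultimately show ?thesis using that[OF G] by blast
qed

definition cyl_vertex :: "nat \<Rightarrow> nat set \<Rightarrow> nat set \<times> nat" where
  "cyl_vertex n A = (if A = {0..n} then cyl_top n else (A, 0))"

definition cyl_embed :: "nat \<Rightarrow> nat \<Rightarrow> (nat \<Rightarrow> nat set) \<Rightarrow> nat \<Rightarrow> nat set \<times> nat" where
  "cyl_embed n m \<sigma> = (\<lambda>i. if i \<le> m then cyl_vertex n (\<sigma> i) else undefined)"

lemma cyl_embed_simplex:
  assumes kn: "k \<le> n" and \<sigma>: "\<sigma> \<in> ssimp (LR dual n k) m"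
  shows "cyl_embed n m \<sigma> \<in> ssimp (subnerve (cyl n k) (le_cyl_dual dual) (cyl_chains n k)) m"
proof -
  have vertex: "cyl_vertex n A \<in> cyl n k" if "A \<in> subsets_with n k" for A
    using that cyl_top_in_cyl[OF kn] unfolding cyl_vertex_def cyl_def by auto
  have mono: "le_cyl (cyl_vertex n A) (cyl_vertex n B)" if "A \<subseteq> B" "B \<subseteq> {0..n}" for A B
    using that unfolding cyl_vertex_def le_cyl_def by auto
  have "cyl_embed n m \<sigma> \<in> ssimp (nerve (cyl n k) (le_cyl_dual dual)) m"
    unfolding nerve_simplex_iff cyl_embed_def
  proof (intro conjI allI impI)
    fix i j assume "i \<le> j" "j \<le> m"
    then have "le_sub dual (\<sigma> i) (\<sigma> j)" "\<sigma> i \<subseteq> {0..n}" "\<sigma> j \<subseteq> {0..n}"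
      using \<sigma> unfolding LR_simplex_iff subsets_with_def by auto
    then show "le_cyl_dual dual (if i \<le> m then cyl_vertex n (\<sigma> i) else undefined)
        (if j \<le> m then cyl_vertex n (\<sigma> j) else undefined)"
      using mono \<open>i \<le> j\<close> \<open>j \<le> m\<close> unfolding le_cyl_dual_def le_sub_def by (cases dual) auto
  qed (use \<sigma> vertex in \<open>auto simp: LR_simplex_iff\<close>)
  then show ?thesis
    using fin_chain_nerve_image fin_chain_le_cyl_dual_iff unfolding cyl_chains_def subnerve_simplex_iff
    by blast
qed

lemma cyl_embed_smap:
  assumes "mono_map m n' \<theta>"
  shows "cyl_embed n m (smap (LR dual n k) m n' \<theta> \<sigma>) =
    smap (subnerve (cyl n k) (le_cyl_dual dual) (cyl_chains n k)) m n' \<theta> (cyl_embed n n' \<sigma>)"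
  using mono_map_le[OF assms] unfolding cyl_embed_def LR_smap subnerve_smap nerve_smap by (intro ext) simp

lemma set_part_cyl_embed:
  assumes "\<sigma> \<in> ssimp (LR dual n k) m"
  shows "set_part m (cyl_embed n m \<sigma>) = \<sigma>"
proof
  fix i show "set_part m (cyl_embed n m \<sigma>) i = \<sigma> i"
    using assms unfolding set_part_def cyl_embed_def cyl_vertex_def LR_simplex_iff by (cases "i \<le> m") auto
qed

lemma cyl_embed_LRJ:
  assumes kn: "k \<le> n" and \<sigma>: "\<sigma> \<in> ssimp (LRJ dual n k) m"
  shows "cyl_embed n m \<sigma> \<in> ssimp (subnerve (cyl n k) (le_cyl_dual dual) (cyl_base n k)) m"
    and "cyl_top n \<notin> cyl_embed n m \<sigma> ` {0..m}"
    and "level_part dual m (cyl_embed n m \<sigma>) = const_simplex m (if dual then 1 else 0)"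
proof -
  have \<sigma>': "\<sigma> \<in> ssimp (LR dual n k) m" "\<forall>i\<le>m. \<sigma> i \<noteq> {0..n}" using \<sigma> by (simp_all add: LRJ_simplex_iff)
  then have level0: "cyl_embed n m \<sigma> i = (\<sigma> i, 0)" if "i \<le> m" for i
    using that unfolding cyl_embed_def cyl_vertex_def by simp
  then show no_top: "cyl_top n \<notin> cyl_embed n m \<sigma> ` {0..m}" by auto
  show "level_part dual m (cyl_embed n m \<sigma>) = const_simplex m (if dual then 1 else 0)"
    using level_part_const[of m "cyl_embed n m \<sigma>" 0] level0 by simp
  show "cyl_embed n m \<sigma> \<in> ssimp (subnerve (cyl n k) (le_cyl_dual dual) (cyl_base n k)) m"
    using cyl_embed_simplex[OF kn \<sigma>'(1)] no_top
    unfolding subnerve_simplex_iff cyl_chains_def cyl_base_def by auto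
qed

lemma LR_marked_to_top:
  assumes \<sigma>: "\<sigma> \<in> LR_marked dual n k" and A: "{\<sigma> 0, \<sigma> 1} = {A, {0..n}}" "A \<noteq> {0..n}"
  shows "A \<in> marked_to_top dual n k"
proof -
  have sw: "\<sigma> 0 \<in> subsets_with n k" "\<sigma> 1 \<in> subsets_with n k"
    using \<sigma> unfolding LR_marked_def LR_simplex_iff by auto
  then have A_sw: "A \<in> subsets_with n k" using A(1) by (metis doubleton_eq_iff)
  then have fin: "finite A" "A \<noteq> {}" "A \<subseteq> {0..n}" unfolding subsets_with_def by (auto intro: finite_subset)
  have eq: "if dual then Min A = Min {0..n} else Max A = Max {0..n}"
    using \<sigma> A(1) unfolding LR_marked_def doubleton_eq_iff by auto
  have "Max {0..n} = n" "Min {0..n} = (0::nat)" by (auto intro: Max_eqI Min_eqI)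
  then have "if dual then 0 \<in> A else n \<in> A" using eq Max_in[OF fin(1,2)] Min_in[OF fin(1,2)] by (cases dual) auto
  moreover have "(A, 0) \<in> cyl n k" using A_sw A(2) unfolding cyl_def by simp
  ultimately show ?thesis unfolding marked_to_top_def by simp
qed

lemma ssmap_cyl_embed:
  assumes kn: "k \<le> n" and G: "ssmap (subnerve (cyl n k) (le_cyl_dual dual) (cyl_chains n k)) C G"
  shows "ssmap (LR dual n k) C (\<lambda>m \<sigma>. G m (cyl_embed n m \<sigma>))"
  unfolding ssmap_def
proof (intro conjI allI impI)
  fix m \<sigma> assume "\<sigma> \<in> ssimp (LR dual n k) m"
  then show "G m (cyl_embed n m \<sigma>) \<in> ssimp C m" using ssmap_simplex[OF G cyl_embed_simplex[OF kn]] by blast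
next
  fix m n' \<theta> \<sigma> assume \<theta>: "mono_map m n' \<theta>" and \<sigma>: "\<sigma> \<in> ssimp (LR dual n k) n'"
  show "G m (cyl_embed n m (smap (LR dual n k) m n' \<theta> \<sigma>)) = smap C m n' \<theta> (G n' (cyl_embed n n' \<sigma>))"
    unfolding cyl_embed_smap[OF \<theta>] by (rule ssmap_smap[OF G \<theta> cyl_embed_simplex[OF kn \<sigma>]])
qed

lemma LR_marked_cases:
  assumes kn: "k \<le> n" and marked: "\<sigma> \<in> LR_marked dual n k"
  obtains (inner) "\<sigma> \<in> ssimp (LRJ dual n k) 1"
    | (top) "cyl_embed n 1 \<sigma> \<in> ssimp (subnerve (cyl n k) (le_cyl_dual dual) (cyl_base n k)) 1"
      "cyl_top n \<in> cyl_embed n 1 \<sigma> ` {0..1}"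
    | (to_top) A where "A \<in> marked_to_top dual n k" "cyl_embed n 1 \<sigma> ` {0..1} = {(A, 0), cyl_top n}"
proof -
  have \<sigma>: "\<sigma> \<in> ssimp (LR dual n k) 1" using marked unfolding LR_marked_def by simp
  have embed: "cyl_embed n 1 \<sigma> ` {0..1} = {cyl_vertex n (\<sigma> 0), cyl_vertex n (\<sigma> 1)}"
    unfolding cyl_embed_def by (auto simp: le_Suc_eq)
  consider "\<sigma> 0 \<noteq> {0..n}" "\<sigma> 1 \<noteq> {0..n}" | "\<sigma> 0 = {0..n}" "\<sigma> 1 = {0..n}"
    | A where "A \<noteq> {0..n}" "{\<sigma> 0, \<sigma> 1} = {A, {0..n}}"
    by (cases "\<sigma> 0 = {0..n}"; cases "\<sigma> 1 = {0..n}") (auto simp: insert_commute)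
  then show ?thesis
  proof cases
    case 1
    then show ?thesis using \<sigma> inner by (auto simp: LRJ_simplex_iff le_Suc_eq)
  next
    case 2
    then have "cyl_embed n 1 \<sigma> ` {0..1} = {cyl_top n}" unfolding embed cyl_vertex_def by simp
    then show ?thesis
      using top cyl_embed_simplex[OF kn \<sigma>] unfolding subnerve_simplex_iff cyl_chains_def cyl_base_def by simp
  next
    case 3
    then have "cyl_embed n 1 \<sigma> ` {0..1} = {(A, 0), cyl_top n}"
      unfolding embed cyl_vertex_def doubleton_eq_iff by auto
    then show ?thesis using to_top LR_marked_to_top[OF marked 3(2,1)] by blast
  qed
qed

lemma LR_extension:
  fixes C :: "'a sset"
  assumes kn: "k \<le> n" and qc: "quasicategory C" and wc: "weakly_closed C W" and W0: "W0 \<subseteq> W"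
    and \<alpha>: "ssmap (sprod C (Delta 1)) C \<alpha>" and \<alpha>_W: "\<alpha> 1 ` (W \<times> ssimp (Delta 1) 1) \<subseteq> W"
    and \<alpha>_id: "\<And>m x. x \<in> ssimp C m \<Longrightarrow> \<alpha> m (x, const_simplex m (if dual then 1 else 0)) = x"
    and \<alpha>_F: "\<And>m x. x \<in> ssimp C m \<Longrightarrow> \<alpha> m (x, const_simplex m (if dual then 0 else 1)) = F m x"
    and f: "ssmap (LRJ dual n k) C f" and f_W: "f 1 ` (LR_marked dual n k \<inter> ssimp (LRJ dual n k) 1) \<subseteq> W"
    and g': "ssmap (LR dual n k) C g'" and g'_W: "g' 1 ` LR_marked dual n k \<subseteq> W0"
    and g'_f: "\<And>m x. x \<in> ssimp (LRJ dual n k) m \<Longrightarrow> g' m x = F m (f m x)"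
  obtains g where "ssmap (LR dual n k) C g" and "g 1 ` LR_marked dual n k \<subseteq> W"
    and "\<And>m x. x \<in> ssimp (LRJ dual n k) m \<Longrightarrow> g m x = f m x"
proof -
  let ?g0 = "base_map n dual g' f \<alpha>" and ?le = "le_cyl_dual dual"
  have g0: "ssmap (subnerve (cyl n k) ?le (cyl_base n k)) C ?g0" by (rule ssmap_base_map[OF \<alpha> \<alpha>_F f g' g'_f])
  have M: "marked_to_top dual n k \<subseteq> {A. (A, 0) \<in> cyl n k}" unfolding marked_to_top_def by auto
  have edges: "?g0 1 s \<in> W" if "s \<in> ssimp (subnerve (cyl n k) ?le (cyl_base n k)) 1"
    and "\<exists>A\<in>marked_to_top dual n k. s ` {0..1} \<subseteq> cyl_triangle n A" for s
    using base_map_triangle_edge[where \<alpha> = \<alpha> and W = W and f = f and g' = g' and W0 = W0,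
        OF \<alpha> \<alpha>_W f f_W g'_W W0 _ that(1)] that(2)
    by blast
  obtain G where G: "ssmap (subnerve (cyl n k) ?le (cyl_chains n k)) C G"
    and G_g0: "\<And>m \<sigma>. \<sigma> \<in> ssimp (subnerve (cyl n k) ?le (cyl_base n k)) m \<Longrightarrow> G m \<sigma> = ?g0 m \<sigma>"
    and G_W: "\<And>A s. A \<in> marked_to_top dual n k \<Longrightarrow> s \<in> ssimp (subnerve (cyl n k) ?le (cyl_chains n k)) 1 \<Longrightarrow>
        s ` {0..1} = {(A, 0), cyl_top n} \<Longrightarrow> G 1 s \<in> W"
    by (rule cyl_extension[OF kn qc wc g0 M edges]) (assumption | rule that)+
  define g where "g m \<sigma> = G m (cyl_embed n m \<sigma>)" for m \<sigma>
  have g: "ssmap (LR dual n k) C g" unfolding g_def by (rule ssmap_cyl_embed[OF kn G])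
  have g_f: "g m \<sigma> = f m \<sigma>" if \<sigma>: "\<sigma> \<in> ssimp (LRJ dual n k) m" for m \<sigma>
  proof -
    note J = cyl_embed_LRJ[OF kn \<sigma>]
    have "g m \<sigma> = \<alpha> m (f m \<sigma>, const_simplex m (if dual then 1 else 0))"
      unfolding g_def G_g0[OF J(1)] base_map_def
      using J(2,3) set_part_cyl_embed[of \<sigma> dual n k m] \<sigma> by (simp add: LRJ_simplex_iff)
    then show ?thesis using \<alpha>_id[OF ssmap_simplex[OF f \<sigma>]] by simp
  qed
  have "g 1 \<sigma> \<in> W" if marked: "\<sigma> \<in> LR_marked dual n k" for \<sigma>
    using kn marked
  proof (cases rule: LR_marked_cases)
    case inner
    then show ?thesis using f_W marked g_f by auto
  next
    case top
    have "\<sigma> \<in> ssimp (LR dual n k) 1" using marked unfolding LR_marked_def by simp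
    then have "g 1 \<sigma> = g' 1 \<sigma>"
      unfolding g_def G_g0[OF top(1)] base_map_def using top(2) set_part_cyl_embed by simp
    then show ?thesis using g'_W W0 marked by auto
  next
    case (to_top A)
    have "\<sigma> \<in> ssimp (LR dual n k) 1" using marked unfolding LR_marked_def by simp
    then show ?thesis unfolding g_def using G_W[OF to_top(1) cyl_embed_simplex[OF kn] to_top(2)] by simp
  qed
  then show ?thesis using that g g_f by blast
qed

lemma marked_rlp_LR:
  fixes C :: "'a sset"
  assumes kn: "k \<le> n" and qc: "quasicategory C" and wc: "weakly_closed C W" and W0: "W0 \<subseteq> W"
    and F: "marked_map C W C W0 F"
    and rlp0: "marked_rlp (LRJ dual n k) (LR dual n k) (LR_marked dual n k) C W0"
    and \<alpha>: "marked_map (sprod C (Delta 1)) (W \<times> ssimp (Delta 1) 1) C W \<alpha>"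
    and \<alpha>_id: "\<And>m x. x \<in> ssimp C m \<Longrightarrow> \<alpha> m (x, const_simplex m (if dual then 1 else 0)) = x"
    and \<alpha>_F: "\<And>m x. x \<in> ssimp C m \<Longrightarrow> \<alpha> m (x, const_simplex m (if dual then 0 else 1)) = F m x"
  shows "marked_rlp (LRJ dual n k) (LR dual n k) (LR_marked dual n k) C W"
  unfolding marked_rlp_def
proof (intro allI impI)
  fix f assume "marked_map (LRJ dual n k) (LR_marked dual n k \<inter> ssimp (LRJ dual n k) 1) C W f"
  then have f: "ssmap (LRJ dual n k) C f" and f_W: "f 1 ` (LR_marked dual n k \<inter> ssimp (LRJ dual n k) 1) \<subseteq> W"
    unfolding marked_map_def by auto
  have "marked_map (LRJ dual n k) (LR_marked dual n k \<inter> ssimp (LRJ dual n k) 1) C W0 (\<lambda>m x. F m (f m x))"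
    using ssmap_comp[OF f] f_W F unfolding marked_map_def by fastforce
  then obtain g' where g': "marked_map (LR dual n k) (LR_marked dual n k) C W0 g'"
    and g'_f: "\<And>m x. x \<in> ssimp (LRJ dual n k) m \<Longrightarrow> g' m x = F m (f m x)"
    using rlp0 unfolding marked_rlp_def by blast
  obtain g where "ssmap (LR dual n k) C g" "g 1 ` LR_marked dual n k \<subseteq> W"
    "\<And>m x. x \<in> ssimp (LRJ dual n k) m \<Longrightarrow> g m x = f m x"
    by (rule LR_extension[OF kn qc wc W0 _ _ \<alpha>_id \<alpha>_F f f_W _ _ g'_f])
      (use \<alpha> g' in \<open>auto simp: marked_map_def\<close>)
  then show "\<exists>g. marked_map (LR dual n k) (LR_marked dual n k) C W g \<and>
      (\<forall>m x. x \<in> ssimp (LRJ dual n k) m \<longrightarrow> g m x = f m x)"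
    unfolding marked_map_def by blast
qed

theorem theorem6p10:
  fixes C :: "'a sset" and W W0 :: "'a set" and F :: "nat \<Rightarrow> 'a \<Rightarrow> 'a"
  assumes qc: "quasicategory C"
    and mW0: "marked_sset C W0"
    and mW: "marked_sset C W"
    and sub: "W0 \<subseteq> W"
    and wc: "weakly_closed C W"
    and F: "marked_map C W C W0 F"
  shows "(rlp_L C W0 \<and> (\<exists>\<alpha>. marked_homotopy C W C W \<alpha> (\<lambda>n x. x) F) \<longrightarrow> CLF C W)
       \<and> (rlp_R C W0 \<and> (\<exists>\<alpha>. marked_homotopy C W C W \<alpha> F (\<lambda>n x. x)) \<longrightarrow> CRF C W)"
proof (intro conjI impI)
  assume "rlp_L C W0 \<and> (\<exists>\<alpha>. marked_homotopy C W C W \<alpha> (\<lambda>n x. x) F)"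
  then obtain \<alpha> where rlp0: "rlp_L C W0" and \<alpha>: "marked_homotopy C W C W \<alpha> (\<lambda>n x. x) F" by blast
  have "marked_rlp (LJ n k) (L n k) (L_marked n k) C W" if "2 \<le> n" "0 < k" "k \<le> n" for n k
    using marked_rlp_LR[of k n C W W0 F False \<alpha>] rlp0 \<alpha> that qc wc sub F
    unfolding LR_False rlp_L_def marked_homotopy_def by simp
  then show "CLF C W" unfolding CLF_def rlp_L_def using wc by blast
next
  assume "rlp_R C W0 \<and> (\<exists>\<alpha>. marked_homotopy C W C W \<alpha> F (\<lambda>n x. x))"
  then obtain \<alpha> where rlp0: "rlp_R C W0" and \<alpha>: "marked_homotopy C W C W \<alpha> F (\<lambda>n x. x)" by blast
  have "marked_rlp (RJ n k) (R n k) (R_marked n k) C W" if "2 \<le> n" "k < n" for n k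
    using marked_rlp_LR[of k n C W W0 F True \<alpha>] rlp0 \<alpha> that qc wc sub F
    unfolding LR_True rlp_R_def marked_homotopy_def by simp
  then show "CRF C W" unfolding CRF_def rlp_R_def using wc by blast
qed

end
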